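(* Let $\mathfrak{g}$ be a complex simply-laced symmetrizable Kac–Moody algebra with index set $I$, and let $\lambda_1,\lambda_2,\lambda_3,\lambda_4$ be dominant integral weights such that $\lambda_1+\lambda_2=\lambda_3+\lambda_4$ and $|(\lambda_1-\lambda_2)(\alpha^\vee)|\le|(\lambda_3-\lambda_4)(\alpha^\vee)|$ for every positive root $\alpha$. Let $(i_1,\ldots,i_t)\in I^t$ with $i_r\ne i_s$ for $r\ne s$, such that the subdiagram of the Dynkin diagram spanned by the nodes $i_1,\ldots,i_t$ is connected of type $A$, $D$ or $E$. Assume that $f_{i_1}\cdots f_{i_t}\pi_{\lambda_4}$ is a (nonzero) $\lambda_3$-dominant element of $B(\lambda_4)$. Then there exists a permutation $\sigma\in S_t$ such that $f_{i_{\sigma(1)}}\cdots f_{i_{\sigma(t)}}\pi_{\lambda_2}$ is nonzero and $\lambda_1$-dominant.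
   Context: $\alpha^\vee$ denotes the coroot of $\alpha$. $B(\lambda)$ is Kashiwara's crystal of the irreducible integrable highest weight module $V(\lambda)$, with operators $e_i,f_i$ valued in $B(\lambda)\sqcup\{0\}$ and highest weight element $\pi_\lambda$; in a monomial $f_{j_1}\cdots f_{j_t}\pi_\lambda$ the rightmost operator is applied first. An element $\pi\in B(\lambda)$ is $\mu$-dominant if $e_i^{\mu(\alpha_i^\vee)+1}\pi=0$ for all $i\in I$. *)

theory Defs
  imports Complex_Main "HOL-Combinatorics.Permutations"
begin

text \<open>Index set I = the finite type 'i.  A i j = a_ij = alpha_j(alpha_i^vee).
  A simply-laced GCM is symmetric (hence symmetrizable) with off-diagonal entries 0 or -1.\<close>

definition simply_laced_GCM :: "('i \<Rightarrow> 'i \<Rightarrow> int) \<Rightarrow> bool" where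
  "simply_laced_GCM A \<longleftrightarrow>
     (\<forall>i. A i i = 2) \<and> (\<forall>i j. i \<noteq> j \<longrightarrow> A i j \<in> {0, -1}) \<and> (\<forall>i j. A i j = A j i)"

definition dyn_adj :: "('i \<Rightarrow> 'i \<Rightarrow> int) \<Rightarrow> 'i \<Rightarrow> 'i \<Rightarrow> bool" where
  "dyn_adj A i j \<longleftrightarrow> i \<noteq> j \<and> A i j \<noteq> 0"

definition connected_nodes :: "('i \<Rightarrow> 'i \<Rightarrow> int) \<Rightarrow> 'i set \<Rightarrow> bool" where
  "connected_nodes A S \<longleftrightarrow>
     (\<forall>i\<in>S. \<forall>j\<in>S. (\<lambda>x y. x \<in> S \<and> y \<in> S \<and> dyn_adj A x y)\<^sup>*\<^sup>* i j)"

text \<open>Standard Dynkin diagrams on vertices {1..n} (Bourbaki numbering).\<close>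
definition edge_A :: "nat \<Rightarrow> nat \<Rightarrow> nat \<Rightarrow> bool" where
  "edge_A n a b \<longleftrightarrow> a \<in> {1..n} \<and> b \<in> {1..n} \<and> (b = a + 1 \<or> a = b + 1)"

definition edge_D :: "nat \<Rightarrow> nat \<Rightarrow> nat \<Rightarrow> bool" where
  "edge_D n a b \<longleftrightarrow> a \<in> {1..n} \<and> b \<in> {1..n} \<and>
     ((\<exists>k. 1 \<le> k \<and> k \<le> n - 2 \<and> {a, b} = {k, k + 1}) \<or> {a, b} = {n - 2, n})"

definition edge_E :: "nat \<Rightarrow> nat \<Rightarrow> nat \<Rightarrow> bool" where
  "edge_E n a b \<longleftrightarrow> a \<in> {1..n} \<and> b \<in> {1..n} \<and>
     ({a, b} = {1, 3} \<or> {a, b} = {2, 4} \<or> (\<exists>k. 3 \<le> k \<and> k \<le> n - 1 \<and> {a, b} = {k, k + 1}))"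

definition diagram_iso :: "('i \<Rightarrow> 'i \<Rightarrow> int) \<Rightarrow> 'i set \<Rightarrow> nat \<Rightarrow> (nat \<Rightarrow> nat \<Rightarrow> bool) \<Rightarrow> bool" where
  "diagram_iso A S n E \<longleftrightarrow>
     (\<exists>\<phi>. bij_betw \<phi> {1..n} S \<and>
          (\<forall>a\<in>{1..n}. \<forall>b\<in>{1..n}. dyn_adj A (\<phi> a) (\<phi> b) \<longleftrightarrow> E a b))"

definition connected_type_ADE :: "('i \<Rightarrow> 'i \<Rightarrow> int) \<Rightarrow> 'i set \<Rightarrow> bool" where
  "connected_type_ADE A S \<longleftrightarrow> connected_nodes A S \<and>
     (\<exists>n. (n \<ge> 1 \<and> diagram_iso A S n (edge_A n)) \<or>
          (n \<ge> 4 \<and> diagram_iso A S n (edge_D n)) \<or>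
          (n \<in> {6, 7, 8} \<and> diagram_iso A S n (edge_E n)))"

text \<open>Root lattice elements are coordinate vectors w.r.t. the simple roots.\<close>
definition coroot_pair :: "('i::finite \<Rightarrow> 'i \<Rightarrow> int) \<Rightarrow> ('i \<Rightarrow> int) \<Rightarrow> 'i \<Rightarrow> int" where
  "coroot_pair A \<alpha> i = (\<Sum>j\<in>UNIV. \<alpha> j * A i j)"

definition simple_refl :: "('i::finite \<Rightarrow> 'i \<Rightarrow> int) \<Rightarrow> 'i \<Rightarrow> ('i \<Rightarrow> int) \<Rightarrow> ('i \<Rightarrow> int)" where
  "simple_refl A i \<alpha> = (\<lambda>j. \<alpha> j - (if j = i then coroot_pair A \<alpha> i else 0))"

definition simple_root :: "'i \<Rightarrow> ('i \<Rightarrow> int)" where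
  "simple_root i = (\<lambda>j. if j = i then 1 else 0)"

inductive_set W_orbit :: "('i::finite \<Rightarrow> 'i \<Rightarrow> int) \<Rightarrow> ('i \<Rightarrow> int) set \<Rightarrow> ('i \<Rightarrow> int) set"
  for A S where
  base: "\<alpha> \<in> S \<Longrightarrow> \<alpha> \<in> W_orbit A S"
| step: "\<alpha> \<in> W_orbit A S \<Longrightarrow> simple_refl A i \<alpha> \<in> W_orbit A S"

definition imag_fund :: "('i::finite \<Rightarrow> 'i \<Rightarrow> int) \<Rightarrow> ('i \<Rightarrow> int) set" where
  "imag_fund A = {\<alpha>. (\<forall>i. \<alpha> i \<ge> 0) \<and> \<alpha> \<noteq> (\<lambda>_. 0) \<and>
       connected_nodes A {i. \<alpha> i \<noteq> 0} \<and> (\<forall>i. coroot_pair A \<alpha> i \<le> 0)}"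

text \<open>Positive roots = positive real roots (W-orbit of simple roots, nonnegative)
  union positive imaginary roots (W-orbit of K), Kac Prop. 5.1 / Thm. 5.4.\<close>
definition positive_roots :: "('i::finite \<Rightarrow> 'i \<Rightarrow> int) \<Rightarrow> ('i \<Rightarrow> int) set" where
  "positive_roots A = {\<alpha> \<in> W_orbit A (range simple_root). \<forall>i. \<alpha> i \<ge> 0} \<union> W_orbit A (imag_fund A)"

text \<open>Integral weights are recorded by their values lambda(alpha_i^vee).
  For alpha = sum c_i alpha_i (simply laced), alpha^vee = sum c_i alpha_i^vee.\<close>
definition wt_coroot :: "('i::finite \<Rightarrow> int) \<Rightarrow> ('i \<Rightarrow> int) \<Rightarrow> int" where
  "wt_coroot w \<alpha> = (\<Sum>i\<in>UNIV. \<alpha> i * w i)"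

definition dominant_integral :: "('i \<Rightarrow> int) \<Rightarrow> bool" where
  "dominant_integral w \<longleftrightarrow> (\<forall>i. w i \<ge> 0)"

text \<open>A path t |-> pi(t) is recorded via the coordinates pi(t)(alpha_i^vee).\<close>
type_synonym 'i lpath = "real \<Rightarrow> 'i \<Rightarrow> real"

definition alpha_vec :: "('i \<Rightarrow> 'i \<Rightarrow> int) \<Rightarrow> 'i \<Rightarrow> 'i \<Rightarrow> real" where
  "alpha_vec A i = (\<lambda>j. real_of_int (A j i))"

definition s_refl :: "('i \<Rightarrow> 'i \<Rightarrow> int) \<Rightarrow> 'i \<Rightarrow> ('i \<Rightarrow> real) \<Rightarrow> ('i \<Rightarrow> real)" where
  "s_refl A i v = (\<lambda>j. v j - v i * alpha_vec A i j)"

definition hmin :: "'i lpath \<Rightarrow> 'i \<Rightarrow> real" where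
  "hmin \<pi> i = Inf ((\<lambda>t. \<pi> t i) ` {0..1})"

definition f_op :: "('i \<Rightarrow> 'i \<Rightarrow> int) \<Rightarrow> 'i \<Rightarrow> 'i lpath \<Rightarrow> 'i lpath option" where
  "f_op A i \<pi> =
     (let m = hmin \<pi> i; p = Sup {t \<in> {0..1}. \<pi> t i = m} in
      if \<pi> 1 i - m < 1 then None
      else let x = Inf {t \<in> {p..1}. \<pi> t i = m + 1} in
        Some (\<lambda>t. if t \<le> p then \<pi> t
                  else if t \<le> x then (\<lambda>j. \<pi> p j + s_refl A i (\<lambda>k. \<pi> t k - \<pi> p k) j)
                  else (\<lambda>j. \<pi> t j - alpha_vec A i j)))"

definition e_op :: "('i \<Rightarrow> 'i \<Rightarrow> int) \<Rightarrow> 'i \<Rightarrow> 'i lpath \<Rightarrow> 'i lpath option" where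
  "e_op A i \<pi> =
     (let m = hmin \<pi> i in
      if m > -1 then None
      else let q = Inf {t \<in> {0..1}. \<pi> t i = m};
               y = Sup {t \<in> {0..q}. \<pi> t i = m + 1} in
        Some (\<lambda>t. if t \<le> y then \<pi> t
                  else if t \<le> q then (\<lambda>j. \<pi> y j + s_refl A i (\<lambda>k. \<pi> t k - \<pi> y k) j)
                  else (\<lambda>j. \<pi> t j + alpha_vec A i j)))"

definition straight :: "('i \<Rightarrow> int) \<Rightarrow> 'i lpath" where
  "straight w = (\<lambda>t j. t * real_of_int (w j))"

text \<open>fword A [j1,...,jt] pi = f_{j1} ... f_{jt} pi (rightmost applied first); None = 0.\<close>
definition fword :: "('i \<Rightarrow> 'i \<Rightarrow> int) \<Rightarrow> 'i list \<Rightarrow> 'i lpath \<Rightarrow> 'i lpath option" where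
  "fword A js \<pi> = foldr (\<lambda>j acc. Option.bind acc (f_op A j)) js (Some \<pi>)"

definition e_pow :: "('i \<Rightarrow> 'i \<Rightarrow> int) \<Rightarrow> 'i \<Rightarrow> nat \<Rightarrow> 'i lpath \<Rightarrow> 'i lpath option" where
  "e_pow A i k \<pi> = ((\<lambda>acc. Option.bind acc (e_op A i)) ^^ k) (Some \<pi>)"

definition mu_dominant :: "('i \<Rightarrow> 'i \<Rightarrow> int) \<Rightarrow> ('i \<Rightarrow> int) \<Rightarrow> 'i lpath \<Rightarrow> bool" where
  "mu_dominant A \<mu> \<pi> \<longleftrightarrow> (\<forall>i. e_pow A i (nat (\<mu> i + 1)) \<pi> = None)"

end

theory Submission
  imports Defs "HOL-Analysis.Analysis"
begin

(* In the path model the lowering operators act explicitly on the straight path pi_lambda: for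
   distinct indices each f_i subtracts a continuous monotone ramp multiple of alpha_i.  Hence
   f_(i_1) ... f_(i_t) pi_lambda is nonzero iff every i_s with lambda(alpha_(i_s)^vee) = 0 has a
   Dynkin neighbour further right in the word (applied earlier), and the result is mu-dominant iff
   every i_s with mu(alpha_(i_s)^vee) = 0 has a neighbour further left: the i-th coordinate of
   the path dips to -1 exactly when no later operator lifts it back.  Both conditions only see
   the order that the word induces on the tree spanned by the i_s, so the theorem becomes a
   statement about orders of a tree carrying the labels lambda_1, ..., lambda_4.  Indicators of
   connected subtrees are positive real roots, so the hypothesis bounds |sum of lambda_1 - lambda_2|
   over every subtree by |sum of lambda_3 - lambda_4|.  With this bound, an order adapted to
   (lambda_4, lambda_3) is transformed into one adapted to (lambda_2, lambda_1) by induction on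
   the tree, contracting a leaf into its neighbour. *)

section \<open>Lowering and raising a path with a monotone coordinate\<close>

lemma Inf_level_set:
  fixes f :: "real \<Rightarrow> real"
  assumes "continuous_on {a..b} f" "t0 \<in> {a..b}" "f t0 = c"
  shows "Inf {t \<in> {a..b}. f t = c} \<in> {t \<in> {a..b}. f t = c}"
    and "\<And>t. t \<in> {a..b} \<Longrightarrow> f t = c \<Longrightarrow> Inf {t \<in> {a..b}. f t = c} \<le> t"
proof -
  let ?L = "{t \<in> {a..b}. f t = c}"
  have bdd: "bdd_below ?L" by (rule bdd_belowI[of _ a]) simp
  have cl: "closed ?L" by (rule continuous_closed_preimage_constant[OF assms(1)]) simp
  have "?L \<noteq> {}" using assms(2,3) by blast
  then show "Inf ?L \<in> ?L" using closed_contains_Inf[OF _ bdd cl] by blast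
  show "Inf ?L \<le> t" if "t \<in> {a..b}" "f t = c" for t
    using that by (intro cInf_lower bdd) simp
qed

lemma Sup_level_set:
  fixes f :: "real \<Rightarrow> real"
  assumes "continuous_on {a..b} f" "t0 \<in> {a..b}" "f t0 = c"
  shows "Sup {t \<in> {a..b}. f t = c} \<in> {t \<in> {a..b}. f t = c}"
    and "\<And>t. t \<in> {a..b} \<Longrightarrow> f t = c \<Longrightarrow> t \<le> Sup {t \<in> {a..b}. f t = c}"
proof -
  let ?L = "{t \<in> {a..b}. f t = c}"
  have bdd: "bdd_above ?L" by (rule bdd_aboveI[of _ b]) simp
  have cl: "closed ?L" by (rule continuous_closed_preimage_constant[OF assms(1)]) simp
  have "?L \<noteq> {}" using assms(2,3) by blast
  then show "Sup ?L \<in> ?L" using closed_contains_Sup[OF _ bdd cl] by blast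
  show "t \<le> Sup ?L" if "t \<in> {a..b}" "f t = c" for t
    using that by (intro cSup_upper bdd) simp
qed

lemma nonpos_after_last_zero:
  fixes f :: "real \<Rightarrow> real"
  assumes "continuous_on {y..q} f" "f q \<le> 0" "\<And>s. s \<in> {y..q} \<Longrightarrow> f s = 0 \<Longrightarrow> s \<le> y"
    and t: "t \<in> {y<..q}"
  shows "f t \<le> 0"
proof (rule ccontr)
  assume "\<not> f t \<le> 0"
  moreover have "continuous_on {t..q} f" by (rule continuous_on_subset[OF assms(1)]) (use t in auto)
  ultimately obtain s where "t \<le> s" "s \<le> q" "f s = 0" using IVT2'[of f q 0 t] assms(2) t by auto
  then show False using assms(3)[of s] t by auto
qed

definition clamp01 :: "real \<Rightarrow> real" where
  "clamp01 x = max 0 (min 1 x)"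

lemma hmin_geI: "(\<And>t. t \<in> {0..1} \<Longrightarrow> c \<le> \<pi> t i) \<Longrightarrow> c \<le> hmin \<pi> i"
  unfolding hmin_def by (rule cInf_greatest) auto

lemma hmin_le: "t \<in> {0..1} \<Longrightarrow> (\<And>t. t \<in> {0..1} \<Longrightarrow> c \<le> \<pi> t i) \<Longrightarrow> hmin \<pi> i \<le> \<pi> t i"
  unfolding hmin_def by (rule cInf_lower) (auto intro!: bdd_belowI[of _ c])

lemma hmin_mono_eq_0:
  assumes "mono (\<lambda>t. \<pi> t i)" "\<pi> 0 i = 0"
  shows "hmin \<pi> i = 0"
proof -
  have ge: "0 \<le> \<pi> t i" if "t \<in> {0..1}" for t
    using monoD[OF assms(1), of 0 t] that assms(2) by simp
  have "hmin \<pi> i \<le> \<pi> 0 i" by (rule hmin_le[of 0 0]) (use ge in auto)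
  moreover have "0 \<le> hmin \<pi> i" using hmin_geI[of 0 \<pi> i] ge by blast
  ultimately show ?thesis using assms(2) by simp
qed

lemma f_op_mono_None:
  assumes "mono (\<lambda>t. \<pi> t i)" "\<pi> 0 i = 0" "\<pi> 1 i < 1"
  shows "f_op A i \<pi> = None"
  using assms hmin_mono_eq_0[of \<pi> i, OF assms(1,2)] by (simp add: f_op_def Let_def)

lemma f_op_mono_shape:
  assumes mo: "mono (\<lambda>t. \<pi> t i)" and z: "\<pi> 0 i = 0" and one: "1 \<le> \<pi> 1 i"
    and co: "continuous_on {0..1} (\<lambda>t. \<pi> t i)"
  obtains p x where "0 \<le> p" "p \<le> x" "x \<le> 1" "\<pi> p i = 0" "\<pi> x i = 1"
    "f_op A i \<pi> = Some (\<lambda>t. if t \<le> p then \<pi> t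
       else if t \<le> x then (\<lambda>j. \<pi> p j + s_refl A i (\<lambda>k. \<pi> t k - \<pi> p k) j)
       else (\<lambda>j. \<pi> t j - alpha_vec A i j))"
proof -
  let ?h = "\<lambda>t. \<pi> t i"
  define p where "p = Sup {t \<in> {0..1}. ?h t = 0}"
  define x where "x = Inf {t \<in> {p..1}. ?h t = 1}"
  have "p \<in> {t \<in> {0..1}. ?h t = 0}"
    unfolding p_def by (rule Sup_level_set(1)[OF co, of 0]) (use z in auto)
  then have p: "0 \<le> p" "p \<le> 1" "?h p = 0" by auto
  have cop: "continuous_on {p..1} ?h" by (rule continuous_on_subset[OF co]) (use p in auto)
  obtain x0 where x0: "x0 \<in> {p..1}" "?h x0 = 1"
    using IVT'[of ?h p 1 1] one p cop by auto
  have "x \<in> {t \<in> {p..1}. ?h t = 1}"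
    unfolding x_def by (rule Inf_level_set(1)[OF cop x0])
  then have x: "p \<le> x" "x \<le> 1" "?h x = 1" by auto
  have ne: "\<not> \<pi> 1 i - 0 < 1" using one by simp
  show thesis
  proof (rule that[OF p(1) x(1,2) p(3) x(3)])
    show "f_op A i \<pi> = Some (\<lambda>t. if t \<le> p then \<pi> t
       else if t \<le> x then (\<lambda>j. \<pi> p j + s_refl A i (\<lambda>k. \<pi> t k - \<pi> p k) j)
       else (\<lambda>j. \<pi> t j - alpha_vec A i j))"
      unfolding f_op_def Let_def hmin_mono_eq_0[of \<pi> i, OF mo z] if_not_P[OF ne] add_0_left
        p_def[symmetric] x_def[symmetric] by (rule refl)
  qed
qed

text \<open>If the \<open>i\<close>-th coordinate rises monotonically from 0, the reflected segment of \<open>f\<^sub>i\<close> is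
  where it climbs from 0 to 1, so \<open>f\<^sub>i\<close> subtracts \<open>clamp01 (\<pi> t i)\<close> times \<open>\<alpha>\<^sub>i\<close>.\<close>
lemma f_op_mono_Some:
  assumes mo: "mono (\<lambda>t. \<pi> t i)" and z: "\<pi> 0 i = 0" and one: "1 \<le> \<pi> 1 i"
    and co: "continuous_on {0..1} (\<lambda>t. \<pi> t i)"
  shows "f_op A i \<pi> = Some (\<lambda>t j. \<pi> t j - clamp01 (\<pi> t i) * alpha_vec A i j)"
proof -
  let ?h = "\<lambda>t. \<pi> t i"
  obtain p x where p: "0 \<le> p" "p \<le> x" "x \<le> 1" "?h p = 0" "?h x = 1"
    and f: "f_op A i \<pi> = Some (\<lambda>t. if t \<le> p then \<pi> t
       else if t \<le> x then (\<lambda>j. \<pi> p j + s_refl A i (\<lambda>k. \<pi> t k - \<pi> p k) j)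
       else (\<lambda>j. \<pi> t j - alpha_vec A i j))"
    using f_op_mono_shape[of \<pi> i, OF mo z one co] by blast
  have pointwise: "(if t \<le> p then \<pi> t
       else if t \<le> x then (\<lambda>j. \<pi> p j + s_refl A i (\<lambda>k. \<pi> t k - \<pi> p k) j)
       else (\<lambda>j. \<pi> t j - alpha_vec A i j)) j = \<pi> t j - clamp01 (\<pi> t i) * alpha_vec A i j" for t j
  proof -
    consider "t \<le> p" | "p < t" "t \<le> x" | "x < t" by linarith
    then show ?thesis
    proof cases
      case 1
      then have "clamp01 (?h t) = 0" using monoD[OF mo 1] p by (simp add: clamp01_def)
      then show ?thesis using 1 by (simp only: if_P)
    next
      case 2
      then have "clamp01 (?h t) = ?h t"
        using monoD[OF mo, of p t] monoD[OF mo, of t x] p by (simp add: clamp01_def)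
      moreover have "\<not> t \<le> p" using 2 by simp
      ultimately show ?thesis using 2 p by (simp only: if_not_P if_P) (simp add: s_refl_def algebra_simps)
    next
      case 3
      then have "clamp01 (?h t) = 1" using monoD[OF mo, of x t] p by (simp add: clamp01_def)
      moreover have "\<not> t \<le> p" "\<not> t \<le> x" using 3 p by simp_all
      ultimately show ?thesis by (simp only: if_not_P) simp
    qed
  qed
  show ?thesis unfolding f by (intro arg_cong[where f = Some] ext) (rule pointwise)
qed

lemma e_op_eq_None_iff_hmin: "e_op A i \<pi> = None \<longleftrightarrow> -1 < hmin \<pi> i"
proof (cases "-1 < hmin \<pi> i")
  case True
  have "e_op A i \<pi> = None" unfolding e_op_def Let_def if_P[OF True] by (rule refl)
  then show ?thesis using True by simp
next
  case False
  have "e_op A i \<pi> \<noteq> None"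
    unfolding e_op_def Let_def if_not_P[OF False] by (rule option.distinct(2))
  then show ?thesis using False by simp
qed

lemma e_op_eq_None_if_above:
  assumes "\<And>t. t \<in> {0..1} \<Longrightarrow> c \<le> \<pi> t i" "-1 < c"
  shows "e_op A i \<pi> = None"
proof -
  have "c \<le> hmin \<pi> i" by (rule hmin_geI) (rule assms(1))
  then show ?thesis using assms(2) by (simp add: e_op_eq_None_iff_hmin)
qed

lemma e_op_eq_None_iff:
  assumes co: "continuous_on {0..1} (\<lambda>t. \<pi> t i)" and ge: "\<And>t. t \<in> {0..1} \<Longrightarrow> -1 \<le> \<pi> t i"
  shows "e_op A i \<pi> = None \<longleftrightarrow> (\<forall>t\<in>{0..1}. \<pi> t i \<noteq> -1)"
proof
  assume "e_op A i \<pi> = None"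
  then have "-1 < hmin \<pi> i" by (simp add: e_op_eq_None_iff_hmin)
  moreover have "hmin \<pi> i \<le> \<pi> t i" if "t \<in> {0..1}" for t by (rule hmin_le[of t "-1"]) (use that ge in auto)
  ultimately show "\<forall>t\<in>{0..1}. \<pi> t i \<noteq> -1" by force
next
  assume ne: "\<forall>t\<in>{0..1}. \<pi> t i \<noteq> -1"
  obtain t1 where t1: "t1 \<in> {0..1}" "\<forall>t\<in>{0..1}. \<pi> t1 i \<le> \<pi> t i"
    using continuous_attains_inf[of "{0..1::real}" "\<lambda>t. \<pi> t i"] co by auto
  have "-1 < \<pi> t1 i" using ne ge t1(1) by force
  then show "e_op A i \<pi> = None" by (rule e_op_eq_None_if_above[rotated]) (use t1 in auto)
qed

text \<open>\<open>q\<close> is the first time the minimum -1 is reached and \<open>y\<close> the last time before \<open>q\<close> at level 0.\<close>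
lemma e_op_Some_shape:
  assumes co: "continuous_on {0..1} (\<lambda>t. \<pi> t i)" and z: "\<pi> 0 i = 0"
    and ge: "\<And>t. t \<in> {0..1} \<Longrightarrow> -1 \<le> \<pi> t i" and e: "e_op A i \<pi> = Some \<pi>'"
  obtains y q where "0 \<le> y" "y \<le> q" "q \<le> 1" "\<pi> y i = 0" "\<pi> q i = -1"
    "\<And>t. t \<in> {0..y} \<Longrightarrow> -1 < \<pi> t i" "\<And>t. t \<in> {y<..q} \<Longrightarrow> \<pi> t i \<le> 0"
    "\<pi>' = (\<lambda>t. if t \<le> y then \<pi> t
              else if t \<le> q then (\<lambda>j. \<pi> y j + s_refl A i (\<lambda>k. \<pi> t k - \<pi> y k) j)
              else (\<lambda>j. \<pi> t j + alpha_vec A i j))"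
proof -
  let ?h = "\<lambda>t. \<pi> t i"
  have "hmin \<pi> i \<le> -1" using e e_op_eq_None_iff_hmin[of A i \<pi>] by auto
  moreover have "-1 \<le> hmin \<pi> i" by (rule hmin_geI) (use ge in auto)
  ultimately have m: "hmin \<pi> i = -1" by linarith
  define q where "q = Inf {t \<in> {0..1}. ?h t = -1}"
  define y where "y = Sup {t \<in> {0..q}. ?h t = 0}"
  have \<pi>': "\<pi>' = (\<lambda>t. if t \<le> y then \<pi> t
              else if t \<le> q then (\<lambda>j. \<pi> y j + s_refl A i (\<lambda>k. \<pi> t k - \<pi> y k) j)
              else (\<lambda>j. \<pi> t j + alpha_vec A i j))"
  proof -
    have ne: "\<not> (-1::real) > -1" and z1: "(-1::real) + 1 = 0" by simp_all
    have "e_op A i \<pi> = Some (\<lambda>t. if t \<le> y then \<pi> t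
              else if t \<le> q then (\<lambda>j. \<pi> y j + s_refl A i (\<lambda>k. \<pi> t k - \<pi> y k) j)
              else (\<lambda>j. \<pi> t j + alpha_vec A i j))"
      unfolding e_op_def Let_def m if_not_P[OF ne] z1 q_def[symmetric] y_def[symmetric] by (rule refl)
    then show ?thesis using e by simp
  qed
  have "e_op A i \<pi> = None \<longleftrightarrow> (\<forall>t\<in>{0..1}. ?h t \<noteq> -1)" by (intro e_op_eq_None_iff co ge)
  then obtain t0 where t0: "t0 \<in> {0..1}" "?h t0 = -1" using e by auto
  have "q \<in> {t \<in> {0..1}. ?h t = -1}" unfolding q_def by (rule Inf_level_set(1)[OF co t0])
  then have q: "0 \<le> q" "q \<le> 1" "?h q = -1" by auto
  have q_first: "q \<le> t" if "t \<in> {0..1}" "?h t = -1" for t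
    unfolding q_def by (rule Inf_level_set(2)[OF co t0 that])
  have coq: "continuous_on {0..q} ?h" by (rule continuous_on_subset[OF co]) (use q in auto)
  have "y \<in> {t \<in> {0..q}. ?h t = 0}"
    unfolding y_def by (rule Sup_level_set(1)[OF coq, of 0]) (use z q in auto)
  then have y: "0 \<le> y" "y \<le> q" "?h y = 0" by auto
  have y_last: "s \<le> y" if "s \<in> {0..q}" "?h s = 0" for s
    unfolding y_def by (rule Sup_level_set(2)[OF coq, of 0]) (use z q that in auto)
  show thesis
  proof (rule that[OF y(1,2) q(2) y(3) q(3) _ _ \<pi>'])
    fix t assume t: "t \<in> {0..y}"
    then have "?h t \<noteq> -1" using q_first[of t] y q by (cases "t = y") auto
    then show "-1 < ?h t" using ge[of t] t y q by fastforce
  next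
    fix t assume t: "t \<in> {y<..q}"
    have coyq: "continuous_on {y..q} ?h" by (rule continuous_on_subset[OF co]) (use y q in auto)
    have last: "s \<le> y" if "s \<in> {y..q}" "?h s = 0" for s using y_last[of s] that y(1) by auto
    have "?h q \<le> 0" using q(3) by simp
    then show "?h t \<le> 0" by (rule nonpos_after_last_zero[OF coyq _ last t])
  qed
qed

lemma e_op_e_op_eq_None:
  assumes co: "continuous_on {0..1} (\<lambda>t. \<pi> t i)" and z: "\<pi> 0 i = 0"
    and ge: "\<And>t. t \<in> {0..1} \<Longrightarrow> -1 \<le> \<pi> t i" and Aii: "A i i = 2"
    and e: "e_op A i \<pi> = Some \<pi>'"
  shows "e_op A i \<pi>' = None"
proof -
  obtain y q where y: "0 \<le> y" "y \<le> q" "q \<le> 1" "\<pi> y i = 0" and "\<pi> q i = -1"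
    and before: "\<And>t. t \<in> {0..y} \<Longrightarrow> -1 < \<pi> t i" and between: "\<And>t. t \<in> {y<..q} \<Longrightarrow> \<pi> t i \<le> 0"
    and \<pi>': "\<pi>' = (\<lambda>t. if t \<le> y then \<pi> t
              else if t \<le> q then (\<lambda>j. \<pi> y j + s_refl A i (\<lambda>k. \<pi> t k - \<pi> y k) j)
              else (\<lambda>j. \<pi> t j + alpha_vec A i j))"
    using e_op_Some_shape[OF co z ge e] by blast
  have coy: "continuous_on {0..y} (\<lambda>t. \<pi> t i)" by (rule continuous_on_subset[OF co]) (use y in auto)
  obtain t2 where t2: "t2 \<in> {0..y}" "\<forall>t\<in>{0..y}. \<pi> t2 i \<le> \<pi> t i"
    using continuous_attains_inf[OF _ _ coy] y by auto
  have "-1 < min (\<pi> t2 i) 0" using before[OF t2(1)] by simp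
  moreover have "min (\<pi> t2 i) 0 \<le> \<pi>' t i" if t: "t \<in> {0..1}" for t
  proof -
    consider "t \<le> y" | "y < t" "t \<le> q" | "q < t" by linarith
    then show ?thesis
    proof cases
      case 1
      then have "\<pi> t2 i \<le> \<pi> t i" using t2(2) t by auto
      then show ?thesis using 1 by (simp add: \<pi>')
    next
      case 2
      then show ?thesis using between[of t] y(4) Aii by (simp add: \<pi>' s_refl_def alpha_vec_def)
    next
      case 3
      then show ?thesis using ge[OF t] Aii y by (simp add: \<pi>' alpha_vec_def)
    qed
  qed
  ultimately show ?thesis by (intro e_op_eq_None_if_above[of "min (\<pi> t2 i) 0"]) auto
qed

section \<open>Lowering operators on the straight path\<close>

lemma simply_laced_diag: "simply_laced_GCM A \<Longrightarrow> A i i = 2"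
  by (simp add: simply_laced_GCM_def)

lemma simply_laced_off_diag:
  "simply_laced_GCM A \<Longrightarrow> i \<noteq> j \<Longrightarrow> A i j = - of_bool (dyn_adj A i j)"
  by (auto simp: simply_laced_GCM_def dyn_adj_def)

lemma simply_laced_adj_commute: "simply_laced_GCM A \<Longrightarrow> dyn_adj A i j \<longleftrightarrow> dyn_adj A j i"
  by (auto simp: dyn_adj_def simply_laced_GCM_def)

lemma simply_laced_symp: "simply_laced_GCM A \<Longrightarrow> symp (dyn_adj A)"
  by (auto simp: symp_def dyn_adj_def simply_laced_GCM_def)

lemma irreflp_dyn_adj: "irreflp (dyn_adj A)"
  by (simp add: irreflp_def dyn_adj_def)

text \<open>The path \<open>t \<mapsto> t \<lambda> - (\<Sum>m. G m t \<alpha>\<^sub>m)\<close>; its \<open>j\<close>-th coordinate uses \<open>\<alpha>\<^sub>m(\<alpha>\<^sub>j\<^sup>\<or>) = A j m\<close>.\<close>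
definition lowered_path :: "('i::finite \<Rightarrow> 'i \<Rightarrow> int) \<Rightarrow> ('i \<Rightarrow> int) \<Rightarrow> ('i \<Rightarrow> real \<Rightarrow> real) \<Rightarrow> 'i lpath"
  where "lowered_path A l G = (\<lambda>t j. t * of_int (l j) - (\<Sum>m\<in>UNIV. G m t * of_int (A j m)))"

definition ramp :: "(real \<Rightarrow> real) \<Rightarrow> bool" where
  "ramp g \<longleftrightarrow> continuous_on UNIV g \<and> mono g \<and> (\<forall>t\<le>0. g t = 0) \<and> (\<forall>t\<ge>1. g t = 1)"

definition regular_profile :: "('i \<Rightarrow> real \<Rightarrow> real) \<Rightarrow> 'i set \<Rightarrow> bool" where
  "regular_profile G K \<longleftrightarrow> (\<forall>m\<in>K. ramp (G m)) \<and> (\<forall>m. m \<notin> K \<longrightarrow> G m = (\<lambda>_. 0))"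

lemma ramp_bounds:
  assumes "ramp g" shows "0 \<le> g t" "g t \<le> 1"
proof -
  have "mono g" using assms by (simp add: ramp_def)
  then have "g (min t 0) \<le> g t" "g t \<le> g (max t 1)" by (simp_all add: monoD)
  then show "0 \<le> g t" "g t \<le> 1" using assms by (auto simp: ramp_def)
qed

context
  fixes G :: "'i::finite \<Rightarrow> real \<Rightarrow> real" and K :: "'i set"
  assumes reg: "regular_profile G K"
begin

lemma regular_profile_continuous: "continuous_on UNIV (G m)"
  using reg by (cases "m \<in> K") (auto simp: regular_profile_def ramp_def)

lemma regular_profile_mono: "mono (G m)"
  using reg by (cases "m \<in> K") (auto simp: regular_profile_def ramp_def mono_def)

lemma regular_profile_nonpos: "t \<le> 0 \<Longrightarrow> G m t = 0"
  using reg by (cases "m \<in> K") (auto simp: regular_profile_def ramp_def)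

lemma regular_profile_bounds: "0 \<le> G m t" "G m t \<le> 1"
  using reg ramp_bounds[of "G m" t] by (cases "m \<in> K"; auto simp: regular_profile_def)+

lemma regular_profile_outside: "m \<notin> K \<Longrightarrow> G m t = 0"
  using reg by (simp add: regular_profile_def)

lemma regular_profile_at_1: "G m 1 = of_bool (m \<in> K)"
  using reg by (cases "m \<in> K") (auto simp: regular_profile_def ramp_def)

lemma continuous_lowered_path: "continuous_on UNIV (\<lambda>t. lowered_path A l G t j)"
  unfolding lowered_path_def by (intro continuous_intros regular_profile_continuous)

lemma lowered_path_at_0: "lowered_path A l G 0 j = 0"
  by (simp add: lowered_path_def regular_profile_nonpos)

end

lemma lowered_path_alt:
  "lowered_path A l G t j = t * of_int (l j) + (\<Sum>m\<in>UNIV. G m t * of_int (- A j m))"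
  by (simp add: lowered_path_def sum_negf)

lemma lowered_path_upd:
  "lowered_path A l (G(k := f)) t j = lowered_path A l G t j - (f t - G k t) * of_int (A j k)"
proof -
  have "(\<Sum>m\<in>UNIV. (G(k := f)) m t * of_int (A j m))
      = (\<Sum>m\<in>UNIV. G m t * of_int (A j m) + of_bool (m = k) * ((f t - G k t) * of_int (A j k)))"
    by (rule sum.cong) (auto simp: algebra_simps)
  then show ?thesis by (simp add: lowered_path_def sum.distrib)
qed

text \<open>Along a coordinate \<open>k\<close> not yet lowered, the lowered path only climbs: each \<open>\<alpha>\<^sub>m\<close> with
  \<open>m \<noteq> k\<close> pairs non-positively with \<open>\<alpha>\<^sub>k\<^sup>\<or>\<close>.\<close>
context
  fixes A :: "'i::finite \<Rightarrow> 'i \<Rightarrow> int" and l :: "'i \<Rightarrow> int" and G K and k :: 'i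
  assumes SL: "simply_laced_GCM A" and dom: "dominant_integral l"
    and reg: "regular_profile G K" and k: "k \<notin> K"
begin

lemma lowered_path_term_nonneg: "0 \<le> G m t * of_int (- A k m)"
  using regular_profile_bounds[OF reg, of m t] regular_profile_nonpos[OF reg]
    simply_laced_off_diag[OF SL, of k m] reg k
  by (cases "m = k") (auto simp: regular_profile_def)

lemma mono_lowered_path: "mono (\<lambda>t. lowered_path A l G t k)"
proof (rule monoI)
  fix t t' :: real assume tt: "t \<le> t'"
  have "t * of_int (l k) \<le> t' * of_int (l k)"
    using dom tt by (simp add: dominant_integral_def mult_right_mono)
  moreover have "G m t * of_int (- A k m) \<le> G m t' * of_int (- A k m)" for m
  proof (cases "m = k")
    case True
    then show ?thesis using reg k by (simp add: regular_profile_def)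
  next
    case False
    then have "0 \<le> - A k m" using simply_laced_off_diag[OF SL, of k m] by simp
    moreover have "G m t \<le> G m t'" by (rule monoD[OF regular_profile_mono[OF reg] tt])
    ultimately show ?thesis by (intro mult_right_mono) auto
  qed
  then have "(\<Sum>m\<in>UNIV. G m t * of_int (- A k m)) \<le> (\<Sum>m\<in>UNIV. G m t' * of_int (- A k m))"
    by (rule sum_mono)
  ultimately show "lowered_path A l G t k \<le> lowered_path A l G t' k"
    unfolding lowered_path_alt by linarith
qed

lemma lowered_path_nonneg: "0 \<le> t \<Longrightarrow> 0 \<le> lowered_path A l G t k"
  using monoD[OF mono_lowered_path, of 0 t] lowered_path_at_0[OF reg] by simp

lemma lowered_path_nonpos: "t \<le> 0 \<Longrightarrow> lowered_path A l G t k \<le> 0"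
  using monoD[OF mono_lowered_path, of t 0] lowered_path_at_0[OF reg] by simp

lemma lowered_path_at_1_ge_1_iff:
  "1 \<le> lowered_path A l G 1 k \<longleftrightarrow> 1 \<le> l k \<or> (\<exists>m\<in>K. dyn_adj A m k)"
proof -
  have coeff: "of_int (- A k m) = (of_bool (dyn_adj A m k) :: real)" if "m \<in> K" for m
  proof -
    have "k \<noteq> m" using that k by auto
    moreover have "dyn_adj A k m \<longleftrightarrow> dyn_adj A m k" by (rule simply_laced_adj_commute[OF SL])
    ultimately show ?thesis using simply_laced_off_diag[OF SL, of k m] by simp
  qed
  have "(\<Sum>m\<in>UNIV. G m 1 * of_int (- A k m)) = (\<Sum>m\<in>UNIV. if m \<in> K then of_int (- A k m) else 0 :: real)"
    by (rule sum.cong) (simp_all add: regular_profile_at_1[OF reg])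
  also have "\<dots> = (\<Sum>m\<in>K. of_int (- A k m))" by (simp add: sum.inter_filter[symmetric])
  also have "\<dots> = (\<Sum>m\<in>K. of_bool (dyn_adj A m k))"
    by (rule sum.cong) (simp_all only: coeff)
  also have "\<dots> = of_nat (card (K \<inter> {m. dyn_adj A m k}))" by simp
  finally have "lowered_path A l G 1 k = of_int (l k) + of_nat (card (K \<inter> {m. dyn_adj A m k}))"
    by (simp add: lowered_path_alt)
  moreover have "0 \<le> l k" using dom by (simp add: dominant_integral_def)
  moreover have "card (K \<inter> {m. dyn_adj A m k}) = 0 \<longleftrightarrow> \<not> (\<exists>m\<in>K. dyn_adj A m k)" by auto
  ultimately show ?thesis by (cases "card (K \<inter> {m. dyn_adj A m k})") auto
qed

lemma regular_profile_upd:
  assumes one: "1 \<le> lowered_path A l G 1 k"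
  shows "regular_profile (G(k := (\<lambda>t. clamp01 (lowered_path A l G t k)))) (insert k K)"
proof -
  let ?H = "\<lambda>t. lowered_path A l G t k"
  have "continuous_on UNIV (\<lambda>t. clamp01 (?H t))"
    unfolding clamp01_def by (intro continuous_intros continuous_lowered_path[OF reg])
  moreover have "mono (\<lambda>t. clamp01 (?H t))"
    using monoD[OF mono_lowered_path] by (intro monoI) (force simp: clamp01_def)
  moreover have "clamp01 (?H t) = 0" if "t \<le> 0" for t
    using lowered_path_nonpos[OF that] by (simp add: clamp01_def)
  moreover have "clamp01 (?H t) = 1" if "1 \<le> t" for t
    using monoD[OF mono_lowered_path that] one by (simp add: clamp01_def)
  ultimately show ?thesis using reg k by (auto simp: regular_profile_def ramp_def)
qed

lemma f_op_lowered_path: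
  "f_op A k (lowered_path A l G) =
    (if 1 \<le> l k \<or> (\<exists>m\<in>K. dyn_adj A m k)
     then Some (lowered_path A l (G(k := (\<lambda>t. clamp01 (lowered_path A l G t k))))) else None)"
proof -
  let ?\<pi> = "lowered_path A l G"
  have mo: "mono (\<lambda>t. ?\<pi> t k)" by (rule mono_lowered_path)
  have z: "?\<pi> 0 k = 0" by (rule lowered_path_at_0[OF reg])
  show ?thesis
  proof (cases "1 \<le> ?\<pi> 1 k")
    case True
    have co: "continuous_on {0..1} (\<lambda>t. ?\<pi> t k)"
      using continuous_lowered_path[OF reg] by (rule continuous_on_subset) simp
    have "f_op A k ?\<pi> = Some (\<lambda>t j. ?\<pi> t j - clamp01 (?\<pi> t k) * alpha_vec A k j)"
      by (rule f_op_mono_Some[of ?\<pi> k, OF mo z True co])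
    also have "(\<lambda>t j. ?\<pi> t j - clamp01 (?\<pi> t k) * alpha_vec A k j)
        = lowered_path A l (G(k := (\<lambda>t. clamp01 (?\<pi> t k))))"
      by (intro ext) (simp add: lowered_path_upd regular_profile_outside[OF reg k] alpha_vec_def)
    finally show ?thesis using True lowered_path_at_1_ge_1_iff by simp
  next
    case False
    then have "f_op A k ?\<pi> = None" by (intro f_op_mono_None[of ?\<pi> k, OF mo z]) simp
    then show ?thesis using False lowered_path_at_1_ge_1_iff by simp
  qed
qed

end

text \<open>\<open>root_profile A l ks m t\<close> is the multiple of \<open>\<alpha>\<^sub>m\<close> removed by time \<open>t\<close> from the straight
  path of \<open>l\<close> by the operators of \<open>ks\<close>, the last one applied first.\<close>
fun root_profile :: "('i::finite \<Rightarrow> 'i \<Rightarrow> int) \<Rightarrow> ('i \<Rightarrow> int) \<Rightarrow> 'i list \<Rightarrow> 'i \<Rightarrow> real \<Rightarrow> real" where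
  "root_profile A l [] = (\<lambda>m t. 0)"
| "root_profile A l (k # ks) =
     (root_profile A l ks)(k := (\<lambda>t. clamp01 (lowered_path A l (root_profile A l ks) t k)))"

fun f_admissible :: "('i \<Rightarrow> 'i \<Rightarrow> int) \<Rightarrow> ('i \<Rightarrow> int) \<Rightarrow> 'i list \<Rightarrow> bool" where
  "f_admissible A l [] = True"
| "f_admissible A l (k # ks) \<longleftrightarrow> f_admissible A l ks \<and> (1 \<le> l k \<or> (\<exists>m\<in>set ks. dyn_adj A m k))"

lemma root_profile_notin: "m \<notin> set ks \<Longrightarrow> root_profile A l ks m = (\<lambda>t. 0)"
  by (induction ks) auto

lemma root_profile_append: "m \<notin> set xs \<Longrightarrow> root_profile A l (xs @ ys) m = root_profile A l ys m"
  by (induction xs) auto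

lemma f_admissible_append: "f_admissible A l (xs @ ys) \<Longrightarrow> f_admissible A l ys"
  by (induction xs) auto

lemma regular_root_profile:
  assumes SL: "simply_laced_GCM A" and dom: "dominant_integral l"
  shows "distinct ks \<Longrightarrow> f_admissible A l ks \<Longrightarrow> regular_profile (root_profile A l ks) (set ks)"
proof (induction ks)
  case Nil
  then show ?case by (simp add: regular_profile_def)
next
  case (Cons k ks)
  then have reg: "regular_profile (root_profile A l ks) (set ks)" and k: "k \<notin> set ks" by auto
  have "1 \<le> lowered_path A l (root_profile A l ks) 1 k"
    using Cons.prems lowered_path_at_1_ge_1_iff[OF SL dom reg k] by simp
  then show ?case using regular_profile_upd[OF SL dom reg k] by (simp add: fun_upd_def)
qed

theorem fword_straight:
  assumes SL: "simply_laced_GCM A" and dom: "dominant_integral l" and "distinct ks"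
  shows "fword A ks (straight l) =
    (if f_admissible A l ks then Some (lowered_path A l (root_profile A l ks)) else None)"
  using \<open>distinct ks\<close>
proof (induction ks)
  case Nil
  then show ?case by (simp add: fword_def straight_def lowered_path_def)
next
  case (Cons k ks)
  then have k: "k \<notin> set ks" and dist: "distinct ks" by auto
  show ?case
  proof (cases "f_admissible A l ks")
    case True
    then have "regular_profile (root_profile A l ks) (set ks)" by (rule regular_root_profile[OF SL dom dist])
    then show ?thesis
      using Cons.IH[OF dist] True by (simp add: fword_def f_op_lowered_path[OF SL dom _ k] fun_upd_def)
  qed (use Cons.IH[OF dist] in \<open>simp add: fword_def\<close>)
qed

section \<open>Dominance of lowered straight paths\<close>

lemma e_pow_Suc: "e_pow A i (Suc k) \<pi> = Option.bind (e_pow A i k \<pi>) (e_op A i)"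
  by (simp add: e_pow_def)

lemma e_pow_eq_None_mono:
  assumes "e_pow A i k \<pi> = None" "k \<le> k'"
  shows "e_pow A i k' \<pi> = None"
  using assms(2) by (induction k' rule: dec_induct) (simp_all add: assms(1) e_pow_Suc)

text \<open>Since \<open>e\<^sub>i\<close> can act at most once on such paths, \<open>\<mu>\<close>-dominance is a condition on the
  coordinates \<open>i\<close> with \<open>\<mu>(\<alpha>\<^sub>i\<^sup>\<or>) = 0\<close> only.\<close>
lemma mu_dominant_iff_avoids_minus_1:
  assumes co: "\<And>i. continuous_on {0..1} (\<lambda>t. \<pi> t i)" and z: "\<And>i. \<pi> 0 i = 0"
    and ge: "\<And>i t. t \<in> {0..1} \<Longrightarrow> -1 \<le> \<pi> t i" and diag: "\<And>i. A i i = 2"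
    and \<mu>: "dominant_integral \<mu>"
  shows "mu_dominant A \<mu> \<pi> \<longleftrightarrow> (\<forall>i. \<mu> i = 0 \<longrightarrow> (\<forall>t\<in>{0..1}. \<pi> t i \<noteq> -1))"
proof -
  have e2: "e_pow A i 2 \<pi> = None" for i
  proof (cases "e_op A i \<pi>")
    case (Some \<pi>')
    have "\<And>t. t \<in> {0..1} \<Longrightarrow> -1 \<le> \<pi> t i" by (rule ge)
    with co z have "e_op A i \<pi>' = None" using diag Some by (rule e_op_e_op_eq_None)
    then show ?thesis using Some by (simp add: e_pow_def numeral_2_eq_2)
  qed (simp add: e_pow_def numeral_2_eq_2)
  have "e_pow A i (nat (\<mu> i + 1)) \<pi> = None \<longleftrightarrow> (\<mu> i = 0 \<longrightarrow> (\<forall>t\<in>{0..1}. \<pi> t i \<noteq> -1))" for i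
  proof (cases "\<mu> i = 0")
    case True
    then show ?thesis using e_op_eq_None_iff[of \<pi> i A] co ge by (simp add: e_pow_def)
  next
    case False
    moreover have "0 \<le> \<mu> i" using \<mu> by (simp add: dominant_integral_def)
    ultimately have "2 \<le> nat (\<mu> i + 1)" by (simp add: le_nat_iff)
    then show ?thesis using e_pow_eq_None_mono[OF e2] False by simp
  qed
  then show ?thesis by (simp add: mu_dominant_def)
qed

text \<open>The coordinates of \<open>f\<^bsub>xs @ i # ys\<^esub> \<pi>\<^sub>l\<close> along \<open>\<alpha>\<^sub>i\<^sup>\<or>\<close>, with \<open>H\<close> the \<open>i\<close>-th coordinate of \<open>f\<^bsub>ys\<^esub> \<pi>\<^sub>l\<close>:
  \<open>f\<^sub>i\<close> turns \<open>H\<close> into \<open>H - 2 clamp01 H\<close>, which dips to -1, and later \<open>f\<^sub>m\<close> with \<open>m\<close> adjacent to \<open>i\<close>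
  lift it back.\<close>
context
  fixes A :: "'i::finite \<Rightarrow> 'i \<Rightarrow> int" and l :: "'i \<Rightarrow> int" and xs ys :: "'i list" and i :: 'i
  assumes SL: "simply_laced_GCM A" and dom: "dominant_integral l"
    and dist: "distinct (xs @ i # ys)" and adm: "f_admissible A l (xs @ i # ys)"
begin

lemma regular_profile_suffix: "regular_profile (root_profile A l ys) (set ys)"
  using regular_root_profile[OF SL dom] dist f_admissible_append[OF adm] by simp

lemma suffix_coord_at_1_ge_1: "1 \<le> lowered_path A l (root_profile A l ys) 1 i"
  using f_admissible_append[OF adm] dist
    lowered_path_at_1_ge_1_iff[OF SL dom regular_profile_suffix, of i] by simp

lemma suffix_coord_nonneg: "0 \<le> t \<Longrightarrow> 0 \<le> lowered_path A l (root_profile A l ys) t i"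
  using lowered_path_nonneg[OF SL dom regular_profile_suffix] dist by simp

lemma prefix_term_nonneg:
  assumes "m \<in> set xs"
  shows "0 \<le> root_profile A l (xs @ i # ys) m t * of_int (- A i m)"
proof (rule mult_nonneg_nonneg)
  show "0 \<le> root_profile A l (xs @ i # ys) m t"
    by (rule regular_profile_bounds(1)[OF regular_root_profile[OF SL dom dist adm]])
  have "i \<noteq> m" using assms dist by auto
  then show "0 \<le> real_of_int (- A i m)" using simply_laced_off_diag[OF SL, of i m] by simp
qed

lemma split_coord_eq:
  defines "H \<equiv> \<lambda>t. lowered_path A l (root_profile A l ys) t i"
  shows "lowered_path A l (root_profile A l (xs @ i # ys)) t i
    = H t - 2 * clamp01 (H t) + (\<Sum>m\<in>set xs. root_profile A l (xs @ i # ys) m t * of_int (- A i m))"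
proof -
  let ?G = "root_profile A l (xs @ i # ys)" and ?G' = "root_profile A l (i # ys)"
  let ?c = "\<lambda>m. of_int (- A i m) :: real"
  have "?G' m = (\<lambda>t. 0)" if "m \<in> set xs" for m
    using that dist root_profile_notin[of m "i # ys" A l] by auto
  moreover have "?G m = ?G' m" if "m \<notin> set xs" for m
    using that by (rule root_profile_append)
  ultimately have "(\<Sum>m\<in>UNIV. ?G m t * ?c m)
      = (\<Sum>m\<in>UNIV. ?G' m t * ?c m + (if m \<in> set xs then ?G m t * ?c m else 0))"
    by (intro sum.cong) auto
  also have "\<dots> = (\<Sum>m\<in>UNIV. ?G' m t * ?c m) + (\<Sum>m\<in>set xs. ?G m t * ?c m)"
    by (simp only: sum.distrib sum.inter_restrict[symmetric] finite_class.finite_UNIV Int_UNIV_left)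
  finally have sums: "(\<Sum>m\<in>UNIV. ?G m t * ?c m)
      = (\<Sum>m\<in>UNIV. ?G' m t * ?c m) + (\<Sum>m\<in>set xs. ?G m t * ?c m)" .
  have "lowered_path A l ?G t i = lowered_path A l ?G' t i + (\<Sum>m\<in>set xs. ?G m t * ?c m)"
    unfolding lowered_path_alt sums by (rule add.assoc[symmetric])
  moreover have "lowered_path A l ?G' t i = H t - 2 * clamp01 (H t)"
    using dist simply_laced_diag[OF SL, of i]
    by (simp add: H_def lowered_path_upd root_profile_notin)
  ultimately show ?thesis by simp
qed

lemma split_coord_ge_minus_1:
  assumes "0 \<le> t"
  shows "-1 \<le> lowered_path A l (root_profile A l (xs @ i # ys)) t i"
proof -
  have "0 \<le> (\<Sum>m\<in>set xs. root_profile A l (xs @ i # ys) m t * of_int (- A i m))"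
    by (intro sum_nonneg prefix_term_nonneg)
  then show ?thesis using suffix_coord_nonneg[OF assms] unfolding split_coord_eq by (simp add: clamp01_def)
qed

lemma split_coord_hits_minus_1:
  assumes "\<not> (\<exists>m\<in>set xs. dyn_adj A m i)"
  shows "\<exists>t\<in>{0..1}. lowered_path A l (root_profile A l (xs @ i # ys)) t i = -1"
proof -
  let ?H = "\<lambda>t. lowered_path A l (root_profile A l ys) t i"
  have "A i m = 0" if "m \<in> set xs" for m
  proof -
    have "i \<noteq> m" using that dist by auto
    moreover have "\<not> dyn_adj A i m" using that assms simply_laced_adj_commute[OF SL] by blast
    ultimately show ?thesis using simply_laced_off_diag[OF SL, of i m] by simp
  qed
  then have no_terms: "(\<Sum>m\<in>set xs. root_profile A l (xs @ i # ys) m t * of_int (- A i m)) = 0" for t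
    by simp
  have "continuous_on {0..1} ?H"
    using continuous_lowered_path[OF regular_profile_suffix] by (rule continuous_on_subset) simp
  then obtain t0 where t0: "t0 \<in> {0..1}" "?H t0 = 1"
    using IVT'[of ?H 0 1 1] suffix_coord_at_1_ge_1 lowered_path_at_0[OF regular_profile_suffix] by auto
  then have "lowered_path A l (root_profile A l (xs @ i # ys)) t0 i = -1"
    unfolding split_coord_eq no_terms by (simp add: clamp01_def)
  then show ?thesis using t0(1) by blast
qed

end

lemma root_profile_le_adj:
  assumes SL: "simply_laced_GCM A" and dom: "dominant_integral l"
    and dist: "distinct (xs @ m # ys)" and adm: "f_admissible A l (xs @ m # ys)"
    and i: "i \<in> set ys" and adj: "dyn_adj A m i" and t: "0 \<le> t"
  shows "root_profile A l (xs @ m # ys) i t \<le> root_profile A l (xs @ m # ys) m t"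
proof -
  let ?G = "root_profile A l ys"
  have reg: "regular_profile ?G (set ys)" by (rule regular_profile_suffix[OF SL dom dist adm])
  have m: "m \<notin> set ys" using dist by simp
  have "A m i = -1" using adj simply_laced_off_diag[OF SL, of m i] by (auto simp: dyn_adj_def)
  then have "?G i t = ?G i t * of_int (- A m i)" by simp
  also have "\<dots> \<le> (\<Sum>m'\<in>UNIV. ?G m' t * of_int (- A m m'))"
    by (intro member_le_sum lowered_path_term_nonneg[OF SL dom reg m]) simp_all
  also have "\<dots> \<le> lowered_path A l ?G t m"
    using t dom by (simp add: lowered_path_alt dominant_integral_def)
  finally have "clamp01 (?G i t) \<le> clamp01 (lowered_path A l ?G t m)"
    by (simp add: clamp01_def)
  moreover have "clamp01 (?G i t) = ?G i t"
    using regular_profile_bounds[OF reg] by (simp add: clamp01_def)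
  moreover have "i \<notin> set xs" using dist i by auto
  ultimately show ?thesis using dist by (simp add: root_profile_append)
qed

lemma split_coord_nonneg_if_prefix_adj:
  assumes SL: "simply_laced_GCM A" and dom: "dominant_integral l"
    and dist: "distinct (xs @ i # ys)" and adm: "f_admissible A l (xs @ i # ys)"
    and m: "m \<in> set xs" "dyn_adj A m i" and t: "0 \<le> t"
  shows "0 \<le> lowered_path A l (root_profile A l (xs @ i # ys)) t i"
proof -
  let ?G = "root_profile A l (xs @ i # ys)" and ?H = "lowered_path A l (root_profile A l ys) t i"
  obtain xs1 xs2 where xs: "xs = xs1 @ m # xs2" using split_list[OF m(1)] by blast
  have "A i m = -1" using m(2) simply_laced_off_diag[OF SL, of i m] simply_laced_adj_commute[OF SL]
    by (auto simp: dyn_adj_def)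
  then have "?G m t = ?G m t * of_int (- A i m)" by simp
  also have "\<dots> \<le> (\<Sum>m'\<in>set xs. ?G m' t * of_int (- A i m'))"
    by (intro member_le_sum prefix_term_nonneg[OF SL dom dist adm]) (simp_all add: m)
  finally have "?G i t \<le> (\<Sum>m'\<in>set xs. ?G m' t * of_int (- A i m'))"
    using root_profile_le_adj[OF SL dom, of xs1 m "xs2 @ i # ys" i t] dist adm m(2) t
    by (simp add: xs)
  moreover have "?G i t = clamp01 ?H"
    using dist by (simp add: root_profile_append)
  moreover have "0 \<le> ?H" by (rule suffix_coord_nonneg[OF SL dom dist adm t])
  ultimately show ?thesis
    using split_coord_eq[OF SL dom dist adm, of t] by (simp add: clamp01_def)
qed

lemma f_admissible_iff:
  assumes "dominant_integral l"
  shows "f_admissible A l ks \<longleftrightarrow>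
    (\<forall>xs i ys. ks = xs @ i # ys \<longrightarrow> l i = 0 \<longrightarrow> (\<exists>m\<in>set ys. dyn_adj A m i))"
proof (induction ks)
  case Nil
  then show ?case by simp
next
  case (Cons k ks)
  have "0 \<le> l k" using assms by (simp add: dominant_integral_def)
  then have "1 \<le> l k \<longleftrightarrow> l k \<noteq> 0" by arith
  with Cons.IH show ?case by (auto simp: Cons_eq_append_conv)
qed

context
  fixes A :: "'i::finite \<Rightarrow> 'i \<Rightarrow> int" and l :: "'i \<Rightarrow> int" and ks :: "'i list"
  assumes SL: "simply_laced_GCM A" and dom: "dominant_integral l"
    and dist: "distinct ks" and adm: "f_admissible A l ks"
begin

lemma regular_fword_profile: "regular_profile (root_profile A l ks) (set ks)"
  by (rule regular_root_profile[OF SL dom dist adm])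

lemma fword_coord_ge_minus_1:
  assumes "t \<in> {0..1}"
  shows "-1 \<le> lowered_path A l (root_profile A l ks) t i"
proof (cases "i \<in> set ks")
  case True
  then obtain xs ys where "ks = xs @ i # ys" by (meson split_list)
  then show ?thesis using split_coord_ge_minus_1[OF SL dom] dist adm assms by auto
next
  case False
  then have "0 \<le> lowered_path A l (root_profile A l ks) t i"
    using lowered_path_nonneg[OF SL dom regular_fword_profile] assms by simp
  then show ?thesis by simp
qed

lemma fword_coord_avoids_minus_1_iff:
  "(\<forall>t\<in>{0..1}. lowered_path A l (root_profile A l ks) t i \<noteq> -1) \<longleftrightarrow>
    (\<forall>xs ys. ks = xs @ i # ys \<longrightarrow> (\<exists>m\<in>set xs. dyn_adj A m i))"
proof
  assume avoid: "\<forall>t\<in>{0..1}. lowered_path A l (root_profile A l ks) t i \<noteq> -1"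
  show "\<forall>xs ys. ks = xs @ i # ys \<longrightarrow> (\<exists>m\<in>set xs. dyn_adj A m i)"
  proof (intro allI impI)
    fix xs ys assume ks: "ks = xs @ i # ys"
    show "\<exists>m\<in>set xs. dyn_adj A m i"
    proof (rule ccontr)
      assume "\<not> (\<exists>m\<in>set xs. dyn_adj A m i)"
      with dist adm have "\<exists>t\<in>{0..1}. lowered_path A l (root_profile A l ks) t i = -1"
        unfolding ks by (rule split_coord_hits_minus_1[OF SL dom])
      then show False using avoid by blast
    qed
  qed
next
  assume adj: "\<forall>xs ys. ks = xs @ i # ys \<longrightarrow> (\<exists>m\<in>set xs. dyn_adj A m i)"
  have "0 \<le> lowered_path A l (root_profile A l ks) t i" if "t \<in> {0..1}" for t
  proof (cases "i \<in> set ks")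
    case True
    then obtain xs ys where ks: "ks = xs @ i # ys" by (meson split_list)
    then obtain m where "m \<in> set xs" "dyn_adj A m i" using adj by blast
    then show ?thesis using split_coord_nonneg_if_prefix_adj[OF SL dom] dist adm ks that by auto
  next
    case False
    then show ?thesis using lowered_path_nonneg[OF SL dom regular_fword_profile False] that by simp
  qed
  then show "\<forall>t\<in>{0..1}. lowered_path A l (root_profile A l ks) t i \<noteq> -1" by force
qed

theorem mu_dominant_fword_iff:
  assumes \<mu>: "dominant_integral \<mu>"
  shows "mu_dominant A \<mu> (lowered_path A l (root_profile A l ks)) \<longleftrightarrow>
    (\<forall>xs i ys. ks = xs @ i # ys \<longrightarrow> \<mu> i = 0 \<longrightarrow> (\<exists>m\<in>set xs. dyn_adj A m i))"
proof -
  have "mu_dominant A \<mu> (lowered_path A l (root_profile A l ks)) \<longleftrightarrow>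
      (\<forall>i. \<mu> i = 0 \<longrightarrow> (\<forall>t\<in>{0..1}. lowered_path A l (root_profile A l ks) t i \<noteq> -1))"
  proof (rule mu_dominant_iff_avoids_minus_1[OF _ _ fword_coord_ge_minus_1 _ \<mu>])
    show "continuous_on {0..1} (\<lambda>t. lowered_path A l (root_profile A l ks) t i)" for i
      using continuous_lowered_path[OF regular_fword_profile] by (rule continuous_on_subset) simp
  qed (simp_all add: lowered_path_at_0[OF regular_fword_profile] simply_laced_diag[OF SL])
  then show ?thesis unfolding fword_coord_avoids_minus_1_iff by blast
qed

end

section \<open>Admissible orders on trees\<close>

definition connected_on :: "('a \<Rightarrow> 'a \<Rightarrow> bool) \<Rightarrow> 'a set \<Rightarrow> bool" where
  "connected_on adj S \<longleftrightarrow> (\<forall>x\<in>S. \<forall>y\<in>S. (\<lambda>x y. x \<in> S \<and> y \<in> S \<and> adj x y)\<^sup>*\<^sup>* x y)"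

text \<open>Acyclicity, encoded by a ranking in which every vertex has at most one neighbour of lower rank.\<close>
definition forest_on :: "('a \<Rightarrow> 'a \<Rightarrow> bool) \<Rightarrow> 'a set \<Rightarrow> bool" where
  "forest_on adj S \<longleftrightarrow> (\<exists>rk :: 'a \<Rightarrow> nat. inj_on rk S \<and>
     (\<forall>v\<in>S. \<forall>u1\<in>S. \<forall>u2\<in>S. adj u1 v \<longrightarrow> adj u2 v \<longrightarrow> rk u1 < rk v \<longrightarrow> rk u2 < rk v \<longrightarrow> u1 = u2))"

lemma forest_on_subset: "forest_on adj S \<Longrightarrow> T \<subseteq> S \<Longrightarrow> forest_on adj T"
  unfolding forest_on_def by (meson inj_on_subset subsetD)

lemma connected_on_singleton: "connected_on adj {v}"
  by (simp add: connected_on_def)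

lemma connected_on_insert:
  assumes conn: "connected_on adj T" and u: "u \<in> T" and adj: "adj l u" and sym: "symp adj"
  shows "connected_on adj (insert l T)"
proof -
  let ?Q = "\<lambda>x y. x \<in> insert l T \<and> y \<in> insert l T \<and> adj x y"
  have inT: "?Q\<^sup>*\<^sup>* x y" if "x \<in> T" "y \<in> T" for x y
  proof -
    have "(\<lambda>x y. x \<in> T \<and> y \<in> T \<and> adj x y)\<^sup>*\<^sup>* x y" using conn that by (simp add: connected_on_def)
    then show ?thesis by (rule rtranclp_mono[THEN predicate2D, rotated]) auto
  qed
  have lu: "?Q l u" "?Q u l" using u adj sym by (auto simp: symp_def)
  show ?thesis unfolding connected_on_def
  proof (intro ballI)
    fix x y assume "x \<in> insert l T" "y \<in> insert l T"
    then consider "x = l" "y = l" | "x = l" "y \<in> T" | "x \<in> T" "y = l" | "x \<in> T" "y \<in> T" by blast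
    then show "?Q\<^sup>*\<^sup>* x y"
    proof cases
      case 1
      then show ?thesis by simp
    next
      case 2
      then show ?thesis using inT[OF u] lu(1) by (blast intro: converse_rtranclp_into_rtranclp)
    next
      case 3
      then show ?thesis using inT[OF _ u] lu(2) by (blast intro: rtranclp.rtrancl_into_rtrancl)
    next
      case 4
      then show ?thesis by (rule inT)
    qed
  qed
qed

text \<open>A path through a vertex with a single neighbour \<open>u\<close> enters and leaves it through \<open>u\<close>.\<close>
lemma connected_on_remove_leaf:
  assumes conn: "connected_on adj T" and u: "u \<in> T" "u \<noteq> l"
    and unique: "\<And>w. w \<in> T \<Longrightarrow> adj w l \<Longrightarrow> w = u" and sym: "symp adj" and irr: "irreflp adj"
  shows "connected_on adj (T - {l})"
proof -
  let ?R = "\<lambda>x y. x \<in> T \<and> y \<in> T \<and> adj x y"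
  let ?R' = "\<lambda>x y. x \<in> T - {l} \<and> y \<in> T - {l} \<and> adj x y"
  have claim: "(z \<noteq> l \<longrightarrow> ?R'\<^sup>*\<^sup>* y z) \<and> (z = l \<longrightarrow> ?R'\<^sup>*\<^sup>* y u)"
    if "?R\<^sup>*\<^sup>* y z" "y \<in> T - {l}" for y z
    using that(1)
  proof (induction rule: rtranclp_induct)
    case base
    then show ?case using that(2) by auto
  next
    case (step z w)
    have "z \<noteq> l \<or> w \<noteq> l" using step(2) irr by (auto simp: irreflp_def)
    moreover have "z = u" if "w = l" using step(2) that unique by auto
    moreover have "w = u" if "z = l" using step(2) that unique sym by (auto simp: symp_def)
    ultimately show ?case using step(2,3) by (auto intro: rtranclp.rtrancl_into_rtrancl)
  qed
  show ?thesis unfolding connected_on_def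
    using claim conn by (auto simp: connected_on_def)
qed

lemma exists_leaf:
  assumes fin: "finite T" and sym: "symp adj" and irr: "irreflp adj"
    and conn: "connected_on adj T" and forest: "forest_on adj T"
    and two: "x0 \<in> T" "y0 \<in> T" "x0 \<noteq> y0"
  obtains l u where "l \<in> T" "u \<in> T" "adj l u" "l \<noteq> u"
    "\<And>w. w \<in> T \<Longrightarrow> adj w l \<Longrightarrow> w = u" "connected_on adj (T - {l})"
proof -
  obtain rk :: "'a \<Rightarrow> nat" where inj: "inj_on rk T"
    and low: "\<forall>v\<in>T. \<forall>u1\<in>T. \<forall>u2\<in>T. adj u1 v \<longrightarrow> adj u2 v \<longrightarrow> rk u1 < rk v \<longrightarrow> rk u2 < rk v \<longrightarrow> u1 = u2"
    using forest by (auto simp: forest_on_def)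
  have "Max (rk ` T) \<in> rk ` T" using fin two by (intro Max_in) auto
  then obtain l where l: "l \<in> T" "rk l = Max (rk ` T)" by (metis imageE)
  have lower: "rk w < rk l" if "w \<in> T" "w \<noteq> l" for w
  proof -
    have "rk w \<le> rk l" using fin that(1) by (simp add: l(2))
    moreover have "rk w \<noteq> rk l" using inj that l(1) by (auto dest: inj_onD)
    ultimately show ?thesis by simp
  qed
  obtain x where x: "x \<in> T" "x \<noteq> l" using two by blast
  have "(\<lambda>x y. x \<in> T \<and> y \<in> T \<and> adj x y)\<^sup>*\<^sup>* l x" using conn l(1) x(1) by (simp add: connected_on_def)
  then obtain u where u: "u \<in> T" "adj l u"
    using x(2) by (cases rule: converse_rtranclpE) auto
  have "u \<noteq> l" using u(2) irr by (auto simp: irreflp_def)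
  have unique: "w = u" if "w \<in> T" "adj w l" for w
  proof -
    have "w \<noteq> l" using that(2) irr by (auto simp: irreflp_def)
    moreover have "adj u l" using u(2) sym by (auto simp: symp_def)
    ultimately show ?thesis using low l(1) u(1) that lower[OF that(1)] lower[OF u(1) \<open>u \<noteq> l\<close>] by blast
  qed
  show ?thesis
    using that[OF l(1) u \<open>u \<noteq> l\<close>[symmetric] unique]
      connected_on_remove_leaf[OF conn u(1) \<open>u \<noteq> l\<close> unique sym irr] by blast
qed


definition later_nbr :: "('a \<Rightarrow> 'a \<Rightarrow> bool) \<Rightarrow> ('a \<Rightarrow> int) \<Rightarrow> 'a set \<Rightarrow> 'a \<Rightarrow> bool" where
  "later_nbr adj \<tau> S v \<longleftrightarrow> (\<exists>m\<in>S. adj m v \<and> \<tau> v < \<tau> m)"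

definition earlier_nbr :: "('a \<Rightarrow> 'a \<Rightarrow> bool) \<Rightarrow> ('a \<Rightarrow> int) \<Rightarrow> 'a set \<Rightarrow> 'a \<Rightarrow> bool" where
  "earlier_nbr adj \<tau> S v \<longleftrightarrow> (\<exists>m\<in>S. adj m v \<and> \<tau> m < \<tau> v)"

definition admissible_order ::
  "('a \<Rightarrow> 'a \<Rightarrow> bool) \<Rightarrow> ('a \<Rightarrow> int) \<Rightarrow> ('a \<Rightarrow> int) \<Rightarrow> ('a \<Rightarrow> int) \<Rightarrow> 'a set \<Rightarrow> bool" where
  "admissible_order adj b a \<tau> S \<longleftrightarrow>
     (\<forall>v\<in>S. (b v = 0 \<longrightarrow> later_nbr adj \<tau> S v) \<and> (a v = 0 \<longrightarrow> earlier_nbr adj \<tau> S v))"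

lemma later_nbr_iff_bex: "later_nbr adj \<tau> S v \<longleftrightarrow> (\<exists>m\<in>{m \<in> S. \<tau> v < \<tau> m}. adj m v)"
  by (auto simp: later_nbr_def)

lemma earlier_nbr_iff_bex: "earlier_nbr adj \<tau> S v \<longleftrightarrow> (\<exists>m\<in>{m \<in> S. \<tau> m < \<tau> v}. adj m v)"
  by (auto simp: earlier_nbr_def)

lemma earlier_nbr_iff_later_nbr_uminus: "earlier_nbr adj \<tau> S v \<longleftrightarrow> later_nbr adj (\<lambda>x. - \<tau> x) S v"
  by (simp add: earlier_nbr_def later_nbr_def)

lemma admissible_order_uminus: "admissible_order adj b a (\<lambda>x. - \<tau> x) S \<longleftrightarrow> admissible_order adj a b \<tau> S"
  by (auto simp: admissible_order_def earlier_nbr_def later_nbr_def)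

lemma admissible_order_singleton:
  "irreflp adj \<Longrightarrow> admissible_order adj b a \<tau> {v} \<longleftrightarrow> b v \<noteq> 0 \<and> a v \<noteq> 0"
  by (auto simp: admissible_order_def earlier_nbr_def later_nbr_def irreflp_def)

locale tree_leaf =
  fixes adj :: "'a \<Rightarrow> 'a \<Rightarrow> bool" and S :: "'a set" and l u :: 'a
  assumes finite: "finite S" and symp: "symp adj"
    and leaf: "l \<in> S" and nbr: "u \<in> S" "adj l u" "l \<noteq> u"
    and unique_nbr: "\<And>w. w \<in> S \<Longrightarrow> adj w l \<Longrightarrow> w = u"
begin

definition merge :: "('a \<Rightarrow> int) \<Rightarrow> 'a \<Rightarrow> int" where
  "merge f = f(u := f u + f l)"

lemma adj_nbr_leaf: "adj u l"
  using nbr(2) symp by (simp add: symp_def)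

lemma nbr_of_leaf: "v \<in> S \<Longrightarrow> adj l v \<Longrightarrow> v = u"
  using unique_nbr symp by (auto simp: symp_def)

lemma nbr_in_rest: "u \<in> S - {l}"
  using nbr by simp

lemma merge_diff: "merge f v - merge g v = merge (\<lambda>x. f x - g x) v"
  by (simp add: merge_def)

lemma subtree_merge:
  assumes T: "T \<subseteq> S - {l}" "T \<noteq> {}" "connected_on adj T"
  obtains T' where "T' \<subseteq> S" "T' \<noteq> {}" "connected_on adj T'"
    "\<And>f. (\<Sum>v\<in>T. merge f v) = (\<Sum>v\<in>T'. f v)"
proof (cases "u \<in> T")
  case True
  have fin: "finite T" using T(1) finite finite_subset by blast
  have "l \<notin> T" using T(1) by auto
  have "(\<Sum>v\<in>T. merge f v) = (\<Sum>v\<in>insert l T. f v)" for f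
  proof -
    have "(\<Sum>v\<in>T. merge f v) = merge f u + (\<Sum>v\<in>T - {u}. merge f v)"
      by (rule sum.remove[OF fin True])
    also have "(\<Sum>v\<in>T - {u}. merge f v) = (\<Sum>v\<in>T - {u}. f v)"
      by (rule sum.cong) (auto simp: merge_def)
    also have "merge f u + (\<Sum>v\<in>T - {u}. f v) = f l + (\<Sum>v\<in>T. f v)"
      using sum.remove[OF fin True, of f] by (simp add: merge_def)
    also have "\<dots> = (\<Sum>v\<in>insert l T. f v)" using fin \<open>l \<notin> T\<close> by simp
    finally show ?thesis .
  qed
  moreover have "connected_on adj (insert l T)"
    using connected_on_insert[OF T(3) True nbr(2) symp] .
  ultimately show thesis using that[of "insert l T"] T(1) leaf by blast
next
  case False
  then have "(\<Sum>v\<in>T. merge f v) = (\<Sum>v\<in>T. f v)" for f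
    by (intro sum.cong) (auto simp: merge_def)
  then show thesis using that[of T] T by blast
qed

lemma subtree_bound_merge:
  assumes "\<forall>T\<subseteq>S. T \<noteq> {} \<longrightarrow> connected_on adj T \<longrightarrow> \<bar>\<Sum>v\<in>T. a v - b v\<bar> \<le> \<bar>\<Sum>v\<in>T. c v - d v\<bar>"
  shows "\<forall>T\<subseteq>S - {l}. T \<noteq> {} \<longrightarrow> connected_on adj T \<longrightarrow>
    \<bar>\<Sum>v\<in>T. merge a v - merge b v\<bar> \<le> \<bar>\<Sum>v\<in>T. merge c v - merge d v\<bar>"
proof (intro allI impI)
  fix T assume "T \<subseteq> S - {l}" "T \<noteq> {}" "connected_on adj T"
  then obtain T' where "T' \<subseteq> S" "T' \<noteq> {}" "connected_on adj T'"
    and sums_eq: "\<And>f. (\<Sum>v\<in>T. merge f v) = (\<Sum>v\<in>T'. f v)"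
    by (rule subtree_merge) blast+
  then show "\<bar>\<Sum>v\<in>T. merge a v - merge b v\<bar> \<le> \<bar>\<Sum>v\<in>T. merge c v - merge d v\<bar>"
    using assms by (simp only: merge_diff sums_eq) blast
qed

lemma later_nbr_merge:
  assumes nonneg: "\<forall>v\<in>S. 0 \<le> d v" and covered: "\<forall>v\<in>S. d v = 0 \<longrightarrow> later_nbr adj \<tau> S v"
    and v: "v \<in> S - {l}" "merge d v = 0"
  shows "later_nbr adj \<tau> (S - {l}) v"
proof (cases "v = u")
  case True
  moreover have "0 \<le> d u" "0 \<le> d l" using nonneg leaf nbr(1) by auto
  ultimately have "d u = 0" "d l = 0" using v(2) by (simp_all add: merge_def)
  then have "later_nbr adj \<tau> S l" "later_nbr adj \<tau> S u" using covered leaf nbr(1) by auto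
  then have "\<tau> l < \<tau> u" using nbr_of_leaf symp by (auto simp: later_nbr_def symp_def)
  moreover obtain m where "m \<in> S" "adj m u" "\<tau> u < \<tau> m"
    using \<open>later_nbr adj \<tau> S u\<close> by (auto simp: later_nbr_def)
  ultimately show ?thesis using True by (auto simp: later_nbr_def)
next
  case False
  then obtain m where "m \<in> S" "adj m v" "\<tau> v < \<tau> m"
    using v covered by (auto simp: merge_def later_nbr_def)
  moreover have "m \<noteq> l" using calculation v False nbr_of_leaf by auto
  ultimately show ?thesis by (auto simp: later_nbr_def)
qed

lemma admissible_order_merge:
  assumes "\<forall>v\<in>S. 0 \<le> c v \<and> 0 \<le> d v" and "admissible_order adj d c \<tau> S"
  shows "admissible_order adj (merge d) (merge c) \<tau> (S - {l})"
proof -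
  have d: "\<forall>v\<in>S. 0 \<le> d v" "\<forall>v\<in>S. d v = 0 \<longrightarrow> later_nbr adj \<tau> S v"
    and c: "\<forall>v\<in>S. 0 \<le> c v" "\<forall>v\<in>S. c v = 0 \<longrightarrow> later_nbr adj (\<lambda>x. - \<tau> x) S v"
    using assms by (auto simp: admissible_order_def earlier_nbr_iff_later_nbr_uminus)
  show ?thesis unfolding admissible_order_def earlier_nbr_iff_later_nbr_uminus
  proof (intro ballI conjI impI)
    fix v assume v: "v \<in> S - {l}"
    show "later_nbr adj \<tau> (S - {l}) v" if "merge d v = 0" by (rule later_nbr_merge[OF d v that])
    show "later_nbr adj (\<lambda>x. - \<tau> x) (S - {l}) v" if "merge c v = 0"
      by (rule later_nbr_merge[OF c v that])
  qed
qed

lemma leaf_label_nonzero: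
  assumes "admissible_order adj d c \<tau> S"
  shows "c l \<noteq> 0 \<or> d l \<noteq> 0"
proof (rule ccontr)
  assume "\<not> (c l \<noteq> 0 \<or> d l \<noteq> 0)"
  then have "later_nbr adj \<tau> S l" "earlier_nbr adj \<tau> S l"
    using assms leaf by (auto simp: admissible_order_def)
  then obtain m1 m2 where "m1 \<in> S" "adj m1 l" "\<tau> l < \<tau> m1" "m2 \<in> S" "adj m2 l" "\<tau> m2 < \<tau> l"
    by (auto simp: later_nbr_def earlier_nbr_def)
  moreover from calculation have "m1 = u" "m2 = u" using unique_nbr by auto
  ultimately show False by simp
qed

lemma nbr_has_other_nbr:
  assumes "admissible_order adj d c \<tau> S" "c u = 0" "d u = 0"
  shows "\<exists>w\<in>S - {l, u}. adj w u"
proof -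
  obtain m1 m2 where "m1 \<in> S" "adj m1 u" "\<tau> u < \<tau> m1" "m2 \<in> S" "adj m2 u" "\<tau> m2 < \<tau> u"
    using assms nbr(1) by (force simp: admissible_order_def later_nbr_def earlier_nbr_def)
  then show ?thesis by (cases "m1 = l") auto
qed

lemma leaf_first_order:
  assumes inj: "inj_on \<tau> (S - {l})"
  obtains \<tau>' :: "'a \<Rightarrow> int" where "inj_on \<tau>' S" "\<And>v. v \<in> S - {l} \<Longrightarrow> \<tau>' v = \<tau> v"
    "\<And>v. v \<in> S - {l} \<Longrightarrow> \<tau>' l < \<tau>' v"
proof -
  define \<tau>' where "\<tau>' = \<tau>(l := Min (\<tau> ` (S - {l})) - 1)"
  have same: "\<tau>' v = \<tau> v" if "v \<in> S - {l}" for v using that by (simp add: \<tau>'_def)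
  have first: "\<tau>' l < \<tau>' v" if "v \<in> S - {l}" for v
  proof -
    have "Min (\<tau> ` (S - {l})) \<le> \<tau> v" using that finite by (intro Min_le) auto
    then show ?thesis using that by (simp add: \<tau>'_def)
  qed
  have "inj_on \<tau>' (S - {l})" using inj same by (simp add: inj_on_def)
  moreover have "\<tau>' l \<notin> \<tau>' ` (S - {l})"
  proof
    assume "\<tau>' l \<in> \<tau>' ` (S - {l})"
    then obtain v where "v \<in> S - {l}" "\<tau>' l = \<tau>' v" by blast
    then show False using first[of v] by simp
  qed
  ultimately have "inj_on \<tau>' (insert l (S - {l}))" unfolding inj_on_insert Diff_idemp by (rule conjI)
  then have "inj_on \<tau>' S" by (simp only: insert_Diff[OF leaf])
  then show thesis using that same first by blast
qed

lemma admissible_order_prepend_leaf: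
  assumes inj: "inj_on \<tau> (S - {l})" and adm: "admissible_order adj (merge b) (merge a) \<tau> (S - {l})"
    and "a l \<noteq> 0" and u_later: "b u = 0 \<Longrightarrow> b l \<noteq> 0 \<Longrightarrow> later_nbr adj \<tau> (S - {l}) u"
  shows "\<exists>\<tau>'. inj_on \<tau>' S \<and> admissible_order adj b a \<tau>' S"
proof -
  obtain \<tau>' where inj': "inj_on \<tau>' S" and same: "\<And>v. v \<in> S - {l} \<Longrightarrow> \<tau>' v = \<tau> v"
    and first: "\<And>v. v \<in> S - {l} \<Longrightarrow> \<tau>' l < \<tau>' v"
    using leaf_first_order[OF inj] by blast
  have later: "later_nbr adj \<tau>' S v" if "later_nbr adj \<tau> (S - {l}) v" "v \<in> S - {l}" for v
    using that same by (auto simp: later_nbr_def)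
  have earlier: "earlier_nbr adj \<tau>' S v" if "earlier_nbr adj \<tau> (S - {l}) v" "v \<in> S - {l}" for v
    using that same by (auto simp: earlier_nbr_def)
  have adm': "admissible_order adj b a \<tau>' S"
    unfolding admissible_order_def
  proof (intro ballI conjI impI)
    fix v assume v: "v \<in> S"
    show "later_nbr adj \<tau>' S v" if "b v = 0"
    proof -
      consider "v = l" | "v = u" | "v \<in> S - {l, u}" using v by blast
      then show ?thesis
      proof cases
        case 1
        then show ?thesis using first[OF nbr_in_rest] nbr(1) adj_nbr_leaf by (auto simp: later_nbr_def)
      next
        case 2
        then show ?thesis using that u_later adm later nbr_in_rest
          by (cases "b l = 0") (auto simp: admissible_order_def merge_def)
      next
        case 3
        then show ?thesis using that adm later by (auto simp: admissible_order_def merge_def)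
      qed
    qed
    show "earlier_nbr adj \<tau>' S v" if "a v = 0"
    proof (cases "v = u")
      case True
      then show ?thesis using first[OF nbr_in_rest] leaf nbr(2) by (auto simp: earlier_nbr_def)
    next
      case False
      moreover have "v \<noteq> l" using that \<open>a l \<noteq> 0\<close> by auto
      ultimately show ?thesis using that v adm earlier by (auto simp: admissible_order_def merge_def)
    qed
  qed
  show ?thesis using inj' adm' by blast
qed

lemma admissible_order_append_leaf:
  assumes inj: "inj_on \<tau> (S - {l})" and adm: "admissible_order adj (merge b) (merge a) \<tau> (S - {l})"
    and "b l \<noteq> 0" and u_earlier: "a u = 0 \<Longrightarrow> a l \<noteq> 0 \<Longrightarrow> earlier_nbr adj \<tau> (S - {l}) u"
  shows "\<exists>\<tau>'. inj_on \<tau>' S \<and> admissible_order adj b a \<tau>' S"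
proof -
  have "inj_on (\<lambda>x. - \<tau> x) (S - {l})" using inj by (simp add: inj_on_def)
  moreover have "admissible_order adj (merge a) (merge b) (\<lambda>x. - \<tau> x) (S - {l})"
    using adm admissible_order_uminus by blast
  ultimately obtain \<tau>' where "inj_on \<tau>' S" "admissible_order adj a b \<tau>' S"
    using admissible_order_prepend_leaf[of "\<lambda>x. - \<tau> x" a b] \<open>b l \<noteq> 0\<close> u_earlier
    by (auto simp: earlier_nbr_iff_later_nbr_uminus)
  then have "inj_on (\<lambda>x. - \<tau>' x) S" "admissible_order adj b a (\<lambda>x. - \<tau>' x) S"
    by (simp_all add: inj_on_def admissible_order_uminus)
  then show ?thesis by blast
qed

lemma admissible_order_extend_leaf:
  assumes inj: "inj_on \<tau> (S - {l})" and adm: "admissible_order adj (merge b) (merge a) \<tau> (S - {l})"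
    and leaf_label: "a l \<noteq> 0 \<or> b l \<noteq> 0"
    and nbr_label: "a u = 0 \<Longrightarrow> b u = 0 \<Longrightarrow> \<exists>w\<in>S - {l, u}. adj w u"
  shows "\<exists>\<tau>'. inj_on \<tau>' S \<and> admissible_order adj b a \<tau>' S"
proof (cases "b l \<noteq> 0 \<and> (a u = 0 \<longrightarrow> a l \<noteq> 0 \<longrightarrow> earlier_nbr adj \<tau> (S - {l}) u)")
  case True
  then show ?thesis using admissible_order_append_leaf[OF inj adm] by blast
next
  case False
  have "a l \<noteq> 0"
    using False leaf_label by auto
  moreover have "later_nbr adj \<tau> (S - {l}) u" if "b u = 0" "b l \<noteq> 0"
  proof -
    have "a u = 0" "\<not> earlier_nbr adj \<tau> (S - {l}) u" using False that \<open>a l \<noteq> 0\<close> by auto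
    then obtain w where w: "w \<in> S - {l, u}" "adj w u" using nbr_label \<open>b u = 0\<close> by blast
    then have "\<tau> w \<noteq> \<tau> u" using inj nbr_in_rest by (auto dest: inj_onD)
    moreover have "\<not> \<tau> w < \<tau> u"
      using w \<open>\<not> earlier_nbr adj \<tau> (S - {l}) u\<close> by (auto simp: earlier_nbr_def)
    ultimately have "\<tau> u < \<tau> w" by simp
    then show ?thesis using w by (auto simp: later_nbr_def)
  qed
  ultimately show ?thesis using admissible_order_prepend_leaf[OF inj adm] by blast
qed

end

lemma admissible_order_exchange_singleton:
  fixes a b c d :: "'a \<Rightarrow> int"
  assumes irr: "irreflp adj" and nonneg: "\<forall>w\<in>{v}. 0 \<le> a w \<and> 0 \<le> b w \<and> 0 \<le> c w \<and> 0 \<le> d w"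
    and sums: "\<forall>w\<in>{v}. a w + b w = c w + d w"
    and subtrees: "\<forall>T\<subseteq>{v}. T \<noteq> {} \<longrightarrow> connected_on adj T \<longrightarrow>
      \<bar>\<Sum>w\<in>T. a w - b w\<bar> \<le> \<bar>\<Sum>w\<in>T. c w - d w\<bar>"
    and adm: "admissible_order adj d c \<tau> {v}"
  shows "admissible_order adj b a \<tau> {v}"
proof -
  have "\<bar>\<Sum>w\<in>{v}. a w - b w\<bar> \<le> \<bar>\<Sum>w\<in>{v}. c w - d w\<bar>"
    using subtrees connected_on_singleton[of adj v] by blast
  then have bound: "\<bar>a v - b v\<bar> \<le> \<bar>c v - d v\<bar>" by simp
  have "d v \<noteq> 0" "c v \<noteq> 0" using adm by (simp_all add: admissible_order_singleton[OF irr])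
  then have "\<bar>c v - d v\<bar> < c v + d v" using nonneg by (simp add: abs_if)
  then have "a v \<noteq> 0" "b v \<noteq> 0" using nonneg sums bound by auto
  then show ?thesis by (simp add: admissible_order_singleton[OF irr])
qed

text \<open>Induction on the tree: contract a leaf into its neighbour, order the smaller tree, then put the
  leaf first or last.\<close>
theorem admissible_order_exchange:
  fixes a b c d \<tau> :: "'a \<Rightarrow> int"
  assumes "finite S" "S \<noteq> {}" "symp adj" "irreflp adj" "connected_on adj S" "forest_on adj S"
    and "\<forall>v\<in>S. 0 \<le> a v \<and> 0 \<le> b v \<and> 0 \<le> c v \<and> 0 \<le> d v"
    and "\<forall>v\<in>S. a v + b v = c v + d v"
    and "\<forall>T\<subseteq>S. T \<noteq> {} \<longrightarrow> connected_on adj T \<longrightarrow> \<bar>\<Sum>v\<in>T. a v - b v\<bar> \<le> \<bar>\<Sum>v\<in>T. c v - d v\<bar>"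
    and "inj_on \<tau> S" "admissible_order adj d c \<tau> S"
  shows "\<exists>\<tau>'. inj_on \<tau>' S \<and> admissible_order adj b a \<tau>' S"
  using assms
proof (induction "card S" arbitrary: S a b c d \<tau> rule: less_induct)
  case less
  note fin = less.prems(1) and ne = less.prems(2) and sym = less.prems(3) and irr = less.prems(4)
    and conn = less.prems(5) and forest = less.prems(6) and nonneg = less.prems(7)
    and sums = less.prems(8) and subtrees = less.prems(9) and inj = less.prems(10)
    and adm = less.prems(11)
  show ?case
  proof (cases "\<exists>x0\<in>S. \<exists>y0\<in>S. x0 \<noteq> y0")
    case False
    then obtain v where S: "S = {v}" using ne by blast
    from nonneg sums subtrees adm have "admissible_order adj b a \<tau> {v}"
      unfolding S by (rule admissible_order_exchange_singleton[OF irr])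
    then show ?thesis using inj by (auto simp only: S)
  next
    case True
    then obtain x0 y0 where two: "x0 \<in> S" "y0 \<in> S" "x0 \<noteq> y0" by blast
    obtain l u where lu: "l \<in> S" "u \<in> S" "adj l u" "l \<noteq> u"
      and unique: "\<And>w. w \<in> S \<Longrightarrow> adj w l \<Longrightarrow> w = u" and conn': "connected_on adj (S - {l})"
      using exists_leaf[OF fin sym irr conn forest two] by blast
    interpret tree_leaf adj S l u by (rule tree_leaf.intro[OF fin sym lu unique])
    have card: "card (S - {l}) < card S" using fin lu(1) by (rule card_Diff1_less)
    have nonneg': "\<forall>v\<in>S - {l}. 0 \<le> merge a v \<and> 0 \<le> merge b v \<and> 0 \<le> merge c v \<and> 0 \<le> merge d v"
      using nonneg lu(1,2) by (auto simp: merge_def)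
    have sums': "\<forall>v\<in>S - {l}. merge a v + merge b v = merge c v + merge d v"
      using bspec[OF sums lu(1)] bspec[OF sums lu(2)] sums by (auto simp: merge_def)
    have subtrees': "\<forall>T\<subseteq>S - {l}. T \<noteq> {} \<longrightarrow> connected_on adj T \<longrightarrow>
        \<bar>\<Sum>v\<in>T. merge a v - merge b v\<bar> \<le> \<bar>\<Sum>v\<in>T. merge c v - merge d v\<bar>"
      by (rule subtree_bound_merge[OF subtrees])
    have adm': "admissible_order adj (merge d) (merge c) \<tau> (S - {l})"
      using nonneg adm by (intro admissible_order_merge) auto
    have "finite (S - {l})" "S - {l} \<noteq> {}" using fin nbr_in_rest by auto
    moreover have "forest_on adj (S - {l})" using forest by (rule forest_on_subset) auto
    moreover have "inj_on \<tau> (S - {l})" using inj by (rule inj_on_subset) auto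
    ultimately obtain \<tau>'' where "inj_on \<tau>'' (S - {l})" "admissible_order adj (merge b) (merge a) \<tau>'' (S - {l})"
      using less.hyps[where S = "S - {l}" and a = "merge a" and b = "merge b" and c = "merge c"
          and d = "merge d" and \<tau> = \<tau>, OF card _ _ sym irr conn' _ nonneg' sums' subtrees' _ adm']
      by blast
    moreover have "a l \<noteq> 0 \<or> b l \<noteq> 0"
      using leaf_label_nonzero[OF adm] bspec[OF nonneg lu(1)] bspec[OF sums lu(1)] by auto
    moreover have "\<exists>w\<in>S - {l, u}. adj w u" if "a u = 0" "b u = 0"
      using nbr_has_other_nbr[OF adm] bspec[OF nonneg lu(2)] bspec[OF sums lu(2)] that by auto
    ultimately show ?thesis by (rule admissible_order_extend_leaf)
  qed
qed

section \<open>Subdiagrams of type ADE and their real roots\<close>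

lemma forest_on_bij_betw:
  assumes bij: "bij_betw \<phi> X S" and adj: "\<forall>a\<in>X. \<forall>b\<in>X. adj' (\<phi> a) (\<phi> b) \<longleftrightarrow> adj a b"
    and forest: "forest_on adj X"
  shows "forest_on adj' S"
proof -
  obtain rk :: "_ \<Rightarrow> nat" where rk: "inj_on rk X"
    and low: "\<forall>v\<in>X. \<forall>u1\<in>X. \<forall>u2\<in>X. adj u1 v \<longrightarrow> adj u2 v \<longrightarrow> rk u1 < rk v \<longrightarrow> rk u2 < rk v \<longrightarrow> u1 = u2"
    using forest by (auto simp: forest_on_def)
  let ?\<psi> = "inv_into X \<phi>"
  have \<psi>: "bij_betw ?\<psi> S X" using bij by (rule bij_betw_inv_into)
  have \<phi>\<psi>: "\<phi> (?\<psi> v) = v" if "v \<in> S" for v using bij that by (simp add: bij_betw_inv_into_right)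
  have inX: "?\<psi> v \<in> X" if "v \<in> S" for v using \<psi> that by (auto dest: bij_betwE)
  have adj_iff: "adj' u v \<longleftrightarrow> adj (?\<psi> u) (?\<psi> v)" if "u \<in> S" "v \<in> S" for u v
    using adj inX[OF that(1)] inX[OF that(2)] \<phi>\<psi>[OF that(1)] \<phi>\<psi>[OF that(2)] by metis
  have "inj_on (rk \<circ> ?\<psi>) S" using rk \<psi> by (auto simp: bij_betw_def intro: comp_inj_on)
  moreover have "u1 = u2" if "v \<in> S" "u1 \<in> S" "u2 \<in> S" "adj' u1 v" "adj' u2 v"
    "(rk \<circ> ?\<psi>) u1 < (rk \<circ> ?\<psi>) v" "(rk \<circ> ?\<psi>) u2 < (rk \<circ> ?\<psi>) v" for v u1 u2
  proof -
    have "?\<psi> u1 = ?\<psi> u2"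
      by (rule low[rule_format, OF inX[OF that(1)] inX[OF that(2)] inX[OF that(3)]])
        (use that adj_iff in auto)
    then show ?thesis using \<phi>\<psi> that(2,3) by metis
  qed
  ultimately show ?thesis unfolding forest_on_def by blast
qed

lemma forest_on_edge_A: "forest_on (edge_A n) {1..n}"
  unfolding forest_on_def by (rule exI[of _ id]) (auto simp: edge_A_def)

lemma forest_on_edge_D:
  assumes "4 \<le> n" shows "forest_on (edge_D n) {1..n}"
proof -
  have lower: "b = (if a = n then n - 2 else a - 1)" if "edge_D n b a" "b < a" for a b
  proof -
    from that(1) have "(\<exists>k. 1 \<le> k \<and> k \<le> n - 2 \<and> {b, a} = {k, k + 1}) \<or> {b, a} = {n - 2, n}"
      by (simp add: edge_D_def)
    then show ?thesis
    proof
      assume "\<exists>k. 1 \<le> k \<and> k \<le> n - 2 \<and> {b, a} = {k, k + 1}"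
      then obtain k where "1 \<le> k" "k \<le> n - 2" "{b, a} = {k, k + 1}" by blast
      then have "b = k" "a = k + 1" using that(2) by (auto simp: doubleton_eq_iff)
      then show ?thesis using \<open>k \<le> n - 2\<close> assms by auto
    next
      assume "{b, a} = {n - 2, n}"
      then show ?thesis using that(2) assms by (auto simp: doubleton_eq_iff)
    qed
  qed
  show ?thesis unfolding forest_on_def
  proof (intro exI[of _ id] conjI ballI impI)
    fix a b1 b2 assume "edge_D n b1 a" "edge_D n b2 a" "id b1 < id a" "id b2 < id a"
    then show "b1 = b2" using lower[of b1 a] lower[of b2 a] by simp
  qed simp
qed

text \<open>In \<open>E\<^sub>n\<close> the ranking \<open>1, 3, 4, 2, 5, 6, \<dots>\<close> of the Bourbaki labels leaves every node with at most
  one neighbour of lower rank.\<close>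
lemma forest_on_edge_E:
  assumes "n \<le> 8" shows "forest_on (edge_E n) {1..n}"
proof -
  define rk :: "nat \<Rightarrow> nat" where "rk x = (if x = 2 then 4 else if x = 3 then 2 else if x = 4 then 3 else x)" for x
  have edge: "edge_E n x y \<longleftrightarrow> x \<in> {1..n} \<and> y \<in> {1..n} \<and>
     ((x = 1 \<and> y = 3) \<or> (x = 3 \<and> y = 1) \<or> (x = 2 \<and> y = 4) \<or> (x = 4 \<and> y = 2) \<or>
      (3 \<le> x \<and> x \<le> n - 1 \<and> y = x + 1) \<or> (3 \<le> y \<and> y \<le> n - 1 \<and> x = y + 1))" for x y
    by (auto simp: edge_E_def doubleton_eq_iff)
  have "inj rk" by (rule injI) (auto simp: rk_def split: if_splits)
  moreover have "b1 = b2" if "a \<in> {1..n}" "edge_E n b1 a" "edge_E n b2 a" "rk b1 < rk a" "rk b2 < rk a"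
    for a b1 b2
  proof -
    have "a = 1 \<or> a = 2 \<or> a = 3 \<or> a = 4 \<or> a = 5 \<or> a = 6 \<or> a = 7 \<or> a = 8" using that(1) assms by auto
    then show ?thesis using that(2-) by (auto simp: edge rk_def)
  qed
  ultimately show ?thesis unfolding forest_on_def
    by (intro exI[of _ rk] conjI ballI impI) (auto intro: inj_on_subset)
qed

lemma connected_type_ADE_forest_on:
  assumes "connected_type_ADE A S"
  shows "forest_on (dyn_adj A) S"
proof -
  have transfer: "forest_on (dyn_adj A) S"
    if iso: "diagram_iso A S n E" and forest: "forest_on E {1..n}" for n E
  proof -
    obtain \<phi> where "bij_betw \<phi> {1..n} S" "\<forall>a\<in>{1..n}. \<forall>b\<in>{1..n}. dyn_adj A (\<phi> a) (\<phi> b) \<longleftrightarrow> E a b"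
      using iso unfolding diagram_iso_def by blast
    then show ?thesis using forest by (rule forest_on_bij_betw)
  qed
  from assms obtain n where
    "(1 \<le> n \<and> diagram_iso A S n (edge_A n)) \<or> (4 \<le> n \<and> diagram_iso A S n (edge_D n)) \<or>
     (n \<in> {6, 7, 8} \<and> diagram_iso A S n (edge_E n))"
    by (auto simp: connected_type_ADE_def)
  then show ?thesis
  proof (elim disjE conjE)
    assume "diagram_iso A S n (edge_A n)"
    then show ?thesis using forest_on_edge_A by (rule transfer)
  next
    assume "4 \<le> n" "diagram_iso A S n (edge_D n)"
    then show ?thesis using forest_on_edge_D by (intro transfer)
  next
    assume "n \<in> {6, 7, 8}" "diagram_iso A S n (edge_E n)"
    then show ?thesis using forest_on_edge_E[of n] by (intro transfer) auto
  qed
qed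

lemma connected_type_ADE_nonempty:
  assumes "connected_type_ADE A S"
  shows "S \<noteq> {}"
proof -
  from assms obtain n where
    "(1 \<le> n \<and> diagram_iso A S n (edge_A n)) \<or> (4 \<le> n \<and> diagram_iso A S n (edge_D n)) \<or>
     (n \<in> {6, 7, 8} \<and> diagram_iso A S n (edge_E n))"
    by (auto simp: connected_type_ADE_def)
  then have "1 \<le> n" and "\<exists>E. diagram_iso A S n E" by auto
  then obtain \<phi> where "bij_betw \<phi> {1..n} S" unfolding diagram_iso_def by blast
  then show ?thesis using \<open>1 \<le> n\<close> by (auto simp: bij_betw_def)
qed

text \<open>Peeling off a leaf is a simple reflection.\<close>
lemma indicator_in_W_orbit:
  fixes A :: "'i::finite \<Rightarrow> 'i \<Rightarrow> int"
  assumes SL: "simply_laced_GCM A"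
  shows "T \<noteq> {} \<Longrightarrow> connected_on (dyn_adj A) T \<Longrightarrow> forest_on (dyn_adj A) T \<Longrightarrow>
    (indicator T :: 'i \<Rightarrow> int) \<in> W_orbit A (range simple_root)"
proof (induction "card T" arbitrary: T rule: less_induct)
  case less
  show ?case
  proof (cases "\<exists>x0\<in>T. \<exists>y0\<in>T. x0 \<noteq> y0")
    case False
    then obtain v where "T = {v}" using less.prems(1) by blast
    then have "indicator T = simple_root v" by (auto simp: simple_root_def indicator_def)
    then show ?thesis by (auto intro: W_orbit.base)
  next
    case True
    then obtain x0 y0 where two: "x0 \<in> T" "y0 \<in> T" "x0 \<noteq> y0" by blast
    obtain l u where lu: "l \<in> T" "u \<in> T" "dyn_adj A l u" "l \<noteq> u"
      and unique: "\<And>w. w \<in> T \<Longrightarrow> dyn_adj A w l \<Longrightarrow> w = u" and conn: "connected_on (dyn_adj A) (T - {l})"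
      using exists_leaf[OF finite simply_laced_symp[OF SL] irreflp_dyn_adj less.prems(2,3) two] by blast
    have IH: "(indicator (T - {l}) :: 'i \<Rightarrow> int) \<in> W_orbit A (range simple_root)"
    proof (rule less.hyps)
      show "card (T - {l}) < card T" by (rule card_Diff1_less[OF finite lu(1)])
      show "T - {l} \<noteq> {}" using lu by auto
      show "connected_on (dyn_adj A) (T - {l})" by (rule conn)
      show "forest_on (dyn_adj A) (T - {l})" using less.prems(3) by (rule forest_on_subset) auto
    qed
    have coeff: "indicator (T - {l}) j * A l j = (if j = u then -1 else 0)" for j
    proof (cases "j \<in> T - {l}")
      case True
      then have "dyn_adj A l j \<longleftrightarrow> j = u"
        using unique lu(3) simply_laced_adj_commute[OF SL, of l j] by auto
      then show ?thesis using True simply_laced_off_diag[OF SL, of l j] by auto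
    next
      case False
      then show ?thesis using lu(2,4) by auto
    qed
    have "coroot_pair A (indicator (T - {l})) l = -1" by (simp add: coroot_pair_def coeff)
    then have "simple_refl A l (indicator (T - {l})) = indicator T"
      using lu(1) by (auto simp: simple_refl_def indicator_def)
    then show ?thesis using W_orbit.step[OF IH, of l] by simp
  qed
qed

lemma indicator_positive_root:
  fixes A :: "'i::finite \<Rightarrow> 'i \<Rightarrow> int"
  assumes "simply_laced_GCM A" "T \<noteq> {}" "connected_on (dyn_adj A) T" "forest_on (dyn_adj A) T"
  shows "(indicator T :: 'i \<Rightarrow> int) \<in> positive_roots A"
  using indicator_in_W_orbit[OF assms] by (simp add: positive_roots_def)

lemma wt_coroot_indicator: "wt_coroot w (indicator T) = (\<Sum>i\<in>T. w i)"
  by (simp add: wt_coroot_def indicator_def)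

lemma subtree_bound_of_root_bound:
  fixes A :: "'i::finite \<Rightarrow> 'i \<Rightarrow> int"
  assumes SL: "simply_laced_GCM A" and forest: "forest_on (dyn_adj A) S"
    and roots: "\<forall>\<alpha>\<in>positive_roots A. \<bar>wt_coroot a \<alpha>\<bar> \<le> \<bar>wt_coroot c \<alpha>\<bar>"
  shows "\<forall>T\<subseteq>S. T \<noteq> {} \<longrightarrow> connected_on (dyn_adj A) T \<longrightarrow> \<bar>\<Sum>v\<in>T. a v\<bar> \<le> \<bar>\<Sum>v\<in>T. c v\<bar>"
proof (intro allI impI)
  fix T assume T: "T \<subseteq> S" "T \<noteq> {}" "connected_on (dyn_adj A) T"
  then have "(indicator T :: 'i \<Rightarrow> int) \<in> positive_roots A"
    using indicator_positive_root[OF SL] forest_on_subset[OF forest] by blast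
  then have "\<bar>wt_coroot a (indicator T)\<bar> \<le> \<bar>wt_coroot c (indicator T)\<bar>" using roots by blast
  then show "\<bar>\<Sum>v\<in>T. a v\<bar> \<le> \<bar>\<Sum>v\<in>T. c v\<bar>" by (simp only: wt_coroot_indicator)
qed

section \<open>From words to orders and back\<close>

lemma strict_sorted_split_sets:
  fixes \<tau> :: "'a \<Rightarrow> 'b::linorder"
  assumes "sorted_wrt (<) (map \<tau> (xs @ i # ys))"
  shows "set xs = {m \<in> set (xs @ i # ys). \<tau> m < \<tau> i}"
    and "set ys = {m \<in> set (xs @ i # ys). \<tau> i < \<tau> m}"
proof -
  have xs: "\<forall>x\<in>set xs. \<tau> x < \<tau> i" and ys: "\<forall>y\<in>set ys. \<tau> i < \<tau> y"
    using assms by (auto simp: sorted_wrt_append sorted_wrt_map)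
  show "set xs = {m \<in> set (xs @ i # ys). \<tau> m < \<tau> i}"
    using xs ys by (auto dest: less_asym)
  show "set ys = {m \<in> set (xs @ i # ys). \<tau> i < \<tau> m}"
    using xs ys by (auto dest: less_asym)
qed

lemma all_splits_iff:
  fixes \<tau> :: "'a \<Rightarrow> 'b::linorder"
  assumes sorted: "sorted_wrt (<) (map \<tau> ks)"
  shows "(\<forall>xs i ys. ks = xs @ i # ys \<longrightarrow> P i (set xs) (set ys)) \<longleftrightarrow>
    (\<forall>v\<in>set ks. P v {m \<in> set ks. \<tau> m < \<tau> v} {m \<in> set ks. \<tau> v < \<tau> m})"
proof -
  have sets: "{m \<in> set ks. \<tau> m < \<tau> i} = set xs" "{m \<in> set ks. \<tau> i < \<tau> m} = set ys"
    if ks: "ks = xs @ i # ys" for xs i ys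
  proof -
    have s: "sorted_wrt (<) (map \<tau> (xs @ i # ys))" using sorted ks by simp
    show "{m \<in> set ks. \<tau> m < \<tau> i} = set xs"
      by (simp only: ks) (rule strict_sorted_split_sets(1)[OF s, symmetric])
    show "{m \<in> set ks. \<tau> i < \<tau> m} = set ys"
      by (simp only: ks) (rule strict_sorted_split_sets(2)[OF s, symmetric])
  qed
  show ?thesis
  proof
    assume H: "\<forall>xs i ys. ks = xs @ i # ys \<longrightarrow> P i (set xs) (set ys)"
    show "\<forall>v\<in>set ks. P v {m \<in> set ks. \<tau> m < \<tau> v} {m \<in> set ks. \<tau> v < \<tau> m}"
    proof
      fix v assume "v \<in> set ks"
      then obtain xs ys where ks: "ks = xs @ v # ys" by (meson split_list)
      then show "P v {m \<in> set ks. \<tau> m < \<tau> v} {m \<in> set ks. \<tau> v < \<tau> m}"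
        unfolding sets[OF ks] using H by blast
    qed
  next
    assume H: "\<forall>v\<in>set ks. P v {m \<in> set ks. \<tau> m < \<tau> v} {m \<in> set ks. \<tau> v < \<tau> m}"
    show "\<forall>xs i ys. ks = xs @ i # ys \<longrightarrow> P i (set xs) (set ys)"
    proof (intro allI impI)
      fix xs i ys assume ks: "ks = xs @ i # ys"
      then have "i \<in> set ks" by simp
      then have "P i {m \<in> set ks. \<tau> m < \<tau> i} {m \<in> set ks. \<tau> i < \<tau> m}" using H by blast
      then show "P i (set xs) (set ys)" by (simp only: sets[OF ks])
    qed
  qed
qed

text \<open>For a word ordered by \<open>\<tau>\<close>, an operator \<open>f\<^sub>m\<close> to the right of \<open>f\<^sub>i\<close> acts before it, so non-vanishing
  and dominance become the two halves of \<^const>\<open>admissible_order\<close>.\<close>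
theorem fword_mu_dominant_iff_admissible_order:
  fixes A :: "'i::finite \<Rightarrow> 'i \<Rightarrow> int" and \<tau> :: "'i \<Rightarrow> int"
  assumes SL: "simply_laced_GCM A" and dom: "dominant_integral l" and \<mu>: "dominant_integral \<mu>"
    and sorted: "sorted_wrt (<) (map \<tau> ks)"
  shows "(\<exists>\<pi>. fword A ks (straight l) = Some \<pi> \<and> mu_dominant A \<mu> \<pi>) \<longleftrightarrow>
    admissible_order (dyn_adj A) l \<mu> \<tau> (set ks)"
proof -
  have dist: "distinct ks" using sorted by (simp add: strict_sorted_iff distinct_map)
  have "(\<exists>\<pi>. fword A ks (straight l) = Some \<pi> \<and> mu_dominant A \<mu> \<pi>) \<longleftrightarrow>
      f_admissible A l ks \<and> mu_dominant A \<mu> (lowered_path A l (root_profile A l ks))"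
    by (simp add: fword_straight[OF SL dom dist])
  also have "\<dots> \<longleftrightarrow> (\<forall>xs i ys. ks = xs @ i # ys \<longrightarrow> l i = 0 \<longrightarrow> (\<exists>m\<in>set ys. dyn_adj A m i)) \<and>
      (\<forall>xs i ys. ks = xs @ i # ys \<longrightarrow> \<mu> i = 0 \<longrightarrow> (\<exists>m\<in>set xs. dyn_adj A m i))"
  proof (rule conj_cong[OF f_admissible_iff[OF dom]])
    assume "\<forall>xs i ys. ks = xs @ i # ys \<longrightarrow> l i = 0 \<longrightarrow> (\<exists>m\<in>set ys. dyn_adj A m i)"
    then have "f_admissible A l ks" using f_admissible_iff[OF dom] by blast
    then show "mu_dominant A \<mu> (lowered_path A l (root_profile A l ks)) \<longleftrightarrow>
        (\<forall>xs i ys. ks = xs @ i # ys \<longrightarrow> \<mu> i = 0 \<longrightarrow> (\<exists>m\<in>set xs. dyn_adj A m i))"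
      by (rule mu_dominant_fword_iff[OF SL dom dist _ \<mu>])
  qed
  also have "\<dots> \<longleftrightarrow> admissible_order (dyn_adj A) l \<mu> \<tau> (set ks)"
    using all_splits_iff[OF sorted, of "\<lambda>i X Y. l i = 0 \<longrightarrow> (\<exists>m\<in>Y. dyn_adj A m i)"]
      all_splits_iff[OF sorted, of "\<lambda>i X Y. \<mu> i = 0 \<longrightarrow> (\<exists>m\<in>X. dyn_adj A m i)"]
    unfolding admissible_order_def later_nbr_iff_bex earlier_nbr_iff_bex ball_conj_distrib
    by (simp only:)
  finally show ?thesis .
qed

lemma distinct_strict_sorted_rank:
  assumes "distinct ks"
  obtains \<tau> :: "'a \<Rightarrow> int" where "sorted_wrt (<) (map \<tau> ks)"
proof
  define \<tau> where "\<tau> v = int (SOME i. i < length ks \<and> ks ! i = v)" for v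
  have "\<tau> (ks ! i) = int i" if "i < length ks" for i
    unfolding \<tau>_def by (rule arg_cong[where f = int], rule some_equality)
      (use that assms nth_eq_iff_index_eq in auto)
  then show "sorted_wrt (<) (map \<tau> ks)" by (simp add: sorted_wrt_iff_nth_less)
qed

lemma sorting_permutation:
  fixes \<tau> :: "'a \<Rightarrow> 'b::linorder"
  assumes "distinct ks" "inj_on \<tau> (set ks)"
  obtains \<sigma> where "\<sigma> permutes {..<length ks}"
    "sorted_wrt (<) (map \<tau> (map (\<lambda>k. ks ! \<sigma> k) [0..<length ks]))"
proof -
  let ?w = "sort_key \<tau> ks"
  have "mset ?w = mset ks" by simp
  then obtain \<sigma> where \<sigma>: "\<sigma> permutes {..<length ks}" "permute_list \<sigma> ks = ?w"
    by (rule mset_eq_permutation)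
  have sorted: "sorted_wrt (<) (map \<tau> ?w)"
    using assms by (simp add: strict_sorted_iff distinct_map)
  have "map (\<lambda>k. ks ! \<sigma> k) [0..<length ks] = ?w" using \<sigma>(2) by (simp add: permute_list_def)
  then show thesis using that[OF \<sigma>(1)] sorted by simp
qed

lemma fword_permutation_of_admissible_order:
  fixes A :: "'i::finite \<Rightarrow> 'i \<Rightarrow> int" and \<tau> :: "'i \<Rightarrow> int"
  assumes SL: "simply_laced_GCM A" and "dominant_integral l" "dominant_integral \<mu>" "distinct js"
    and inj: "inj_on \<tau> (set js)" and adm: "admissible_order (dyn_adj A) l \<mu> \<tau> (set js)"
  shows "\<exists>\<sigma>. \<sigma> permutes {..<length js} \<and>
    (\<exists>\<pi>. fword A (map (\<lambda>k. js ! \<sigma> k) [0..<length js]) (straight l) = Some \<pi> \<and> mu_dominant A \<mu> \<pi>)"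
proof -
  obtain \<sigma> where \<sigma>: "\<sigma> permutes {..<length js}"
    and sorted: "sorted_wrt (<) (map \<tau> (map (\<lambda>k. js ! \<sigma> k) [0..<length js]))"
    using sorting_permutation[OF assms(4) inj] by blast
  have "set (map (\<lambda>k. js ! \<sigma> k) [0..<length js]) = set js"
    using set_permute_list[OF \<sigma>] by (simp add: permute_list_def)
  then have "admissible_order (dyn_adj A) l \<mu> \<tau> (set (map (\<lambda>k. js ! \<sigma> k) [0..<length js]))"
    using adm by (simp only:)
  then have "\<exists>\<pi>. fword A (map (\<lambda>k. js ! \<sigma> k) [0..<length js]) (straight l) = Some \<pi> \<and>
      mu_dominant A \<mu> \<pi>"
    by (rule iffD2[OF fword_mu_dominant_iff_admissible_order[OF SL assms(2,3) sorted]])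
  then show ?thesis using \<sigma> by blast
qed

theorem mainTheorem7:
  fixes A :: "'i::finite \<Rightarrow> 'i \<Rightarrow> int"
    and l1 l2 l3 l4 :: "'i \<Rightarrow> int"
    and js :: "'i list"
  assumes "simply_laced_GCM A"
    and "dominant_integral l1" and "dominant_integral l2"
    and "dominant_integral l3" and "dominant_integral l4"
    and "\<forall>i. l1 i + l2 i = l3 i + l4 i"
    and "\<forall>\<alpha>\<in>positive_roots A.
           \<bar>wt_coroot (\<lambda>i. l1 i - l2 i) \<alpha>\<bar> \<le> \<bar>wt_coroot (\<lambda>i. l3 i - l4 i) \<alpha>\<bar>"
    and "distinct js"
    and "connected_type_ADE A (set js)"
    and "\<exists>\<pi>. fword A js (straight l4) = Some \<pi> \<and> mu_dominant A l3 \<pi>"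
  shows "\<exists>\<sigma>. \<sigma> permutes {..<length js} \<and>
           (\<exists>\<pi>'. fword A (map (\<lambda>k. js ! \<sigma> k) [0..<length js]) (straight l2) = Some \<pi>' \<and>
                  mu_dominant A l1 \<pi>')"
proof -
  note SL = assms(1)
  obtain \<tau> :: "'i \<Rightarrow> int" where \<tau>: "sorted_wrt (<) (map \<tau> js)"
    using distinct_strict_sorted_rank[OF assms(8)] .
  have adm: "admissible_order (dyn_adj A) l4 l3 \<tau> (set js)"
    using fword_mu_dominant_iff_admissible_order[OF SL assms(5,4) \<tau>] assms(10) by blast
  have inj: "inj_on \<tau> (set js)" using \<tau> by (simp add: strict_sorted_iff distinct_map)
  have conn: "connected_on (dyn_adj A) (set js)"
    using assms(9) unfolding connected_type_ADE_def connected_nodes_def connected_on_def by blast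
  have forest: "forest_on (dyn_adj A) (set js)" by (rule connected_type_ADE_forest_on[OF assms(9)])
  have nonneg: "\<forall>v\<in>set js. 0 \<le> l1 v \<and> 0 \<le> l2 v \<and> 0 \<le> l3 v \<and> 0 \<le> l4 v"
    using assms(2-5) by (simp add: dominant_integral_def)
  have sums: "\<forall>v\<in>set js. l1 v + l2 v = l3 v + l4 v" using assms(6) by simp
  obtain \<tau>' where "inj_on \<tau>' (set js)" "admissible_order (dyn_adj A) l2 l1 \<tau>' (set js)"
    using admissible_order_exchange[OF finite connected_type_ADE_nonempty[OF assms(9)]
        simply_laced_symp[OF SL] irreflp_dyn_adj conn forest nonneg sums
        subtree_bound_of_root_bound[OF SL forest assms(7)] inj adm] by blast
  then show ?thesis by (rule fword_permutation_of_admissible_order[OF SL assms(3,2,8)])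
qed

end
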